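(* For $n\ge2$, the assignment $\lambda_{kl}\mapsto\lambda_{kl}$ ($1\le k\ne l\le n$) defines an injective homomorphism from the virtual pure braid group $VP_n$ into $PL_n\le TVP_n$. In particular, $VP_n$ is isomorphic to the subgroup of $TVP_n$ generated by the elements $\lambda_{kl}$, $1\le k\neq l\le n$.
   Context: For $n\ge 2$, the twisted virtual braid group $TVB_n$ is the group with generators $\sigma_1,\dots,\sigma_{n-1}$, $\rho_1,\dots,\rho_{n-1}$, $\gamma_1,\dots,\gamma_n$ and defining relations: $\sigma_i\sigma_{i+1}\sigma_i=\sigma_{i+1}\sigma_i\sigma_{i+1}$ ($1\le i\le n-2$); $\sigma_i\sigma_j=\sigma_j\sigma_i$ ($|i-j|\ge 2$); $\rho_i^2=1$; $\rho_i\rho_j=\rho_j\rho_i$ ($|i-j|\ge2$); $\rho_i\rho_{i+1}\rho_i=\rho_{i+1}\rho_i\rho_{i+1}$ ($1\le i\le n-2$); $\sigma_i\rho_j=\rho_j\sigma_i$ ($|i-j|\ge 2$); $\rho_i\rho_{i+1}\sigma_i=\sigma_{i+1}\rho_i\rho_{i+1}$ ($1\le i\le n-2$); $\gamma_i^2=1$ and $\gamma_i\gamma_j=\gamma_j\gamma_i$ (all $i,j$); $\gamma_j\rho_i=\rho_i\gamma_j$ and $\gamma_j\sigma_i=\sigma_i\gamma_j$ for $j\notin\{i,i+1\}$; $\rho_i\gamma_i=\gamma_{i+1}\rho_i$ ($1\le i\le n-1$); $\rho_i\sigma_i\rho_i=\gamma_{i+1}\gamma_i\sigma_i\gamma_i\gamma_{i+1}$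 ($1\le i\le n-1$). $TVP_n$ is the kernel of $\varphi_P:TVB_n\to S_n$, $\sigma_i,\rho_i\mapsto(i,i+1)$, $\gamma_j\mapsto e$. In $TVB_n$ define $\lambda_{i,i+1}=\rho_i\sigma_i^{-1}$, $\lambda_{i+1,i}=\rho_i\lambda_{i,i+1}\rho_i$ ($1\le i\le n-1$), and for $1\le i<j-1\le n-1$: $\lambda_{ij}=\rho_{j-1}\cdots\rho_{i+1}\lambda_{i,i+1}\rho_{i+1}\cdots\rho_{j-1}$, $\lambda_{ji}=\rho_{j-1}\cdots\rho_{i+1}\lambda_{i+1,i}\rho_{i+1}\cdots\rho_{j-1}$. $A_n=\langle\gamma_1,\dots,\gamma_n\rangle$; $\psi_P:TVP_n\to A_n$ is the homomorphism with $\lambda_{kl}\mapsto e$, $\gamma_j\mapsto\gamma_j$; $PL_n=\ker\psi_P$. The virtual pure braid group $VP_n$ is the abstract group with generators $\lambda_{ij}$, $1\le i\ne j\le n$, and defining relations $\lambda_{ij}\lambda_{kl}=\lambda_{kl}\lambda_{ij}$ and $\lambda_{ki}\lambda_{kj}\lambda_{ij}=\lambda_{ij}\lambda_{kj}\lambda_{ki}$, where distinct letters denote distinct indices. *)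

theory Defs
  imports "HOL-Algebra.Algebra"
begin

text \<open>A word is a list of letters; (g, True) stands for g and (g, False) for g inverse.\<close>
type_synonym 'g word = "('g \<times> bool) list"

definition winv :: "'g word \<Rightarrow> 'g word" where
  "winv w = rev (map (\<lambda>(g, b). (g, \<not> b)) w)"

inductive word_eq :: "('g word \<times> 'g word) set \<Rightarrow> 'g word \<Rightarrow> 'g word \<Rightarrow> bool"
  for R where
  refl: "word_eq R w w"
| sym: "word_eq R u v \<Longrightarrow> word_eq R v u"
| trans: "word_eq R u v \<Longrightarrow> word_eq R v w \<Longrightarrow> word_eq R u w"
| cancel: "word_eq R (u @ [(a, b), (a, \<not> b)] @ v) (u @ v)"
| rel: "(l, r) \<in> R \<Longrightarrow> word_eq R (u @ l @ v) (u @ r @ v)"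

definition wclass :: "('g word \<times> 'g word) set \<Rightarrow> 'g word \<Rightarrow> 'g word set" where
  "wclass R w = {v. word_eq R v w}"

definition pres_group :: "'g set \<Rightarrow> ('g word \<times> 'g word) set \<Rightarrow> 'g word set monoid" where
  "pres_group Gs R = monoid.make {wclass R w | w. set w \<subseteq> Gs \<times> UNIV}
     (\<lambda>A B. {v. \<exists>a\<in>A. \<exists>b\<in>B. word_eq R v (a @ b)}) (wclass R [])"

definition gw :: "'g \<Rightarrow> 'g word" where
  "gw g = [(g, True)]"

text \<open>S i = sigma_i, Rh i = rho_i, G j = gamma_j.\<close>
datatype tvb_gen = S nat | Rh nat | G nat

definition tvb_gens :: "nat \<Rightarrow> tvb_gen set" where
  "tvb_gens n = {S i | i. 1 \<le> i \<and> i \<le> n - 1} \<union> {Rh i | i. 1 \<le> i \<and> i \<le> n - 1}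
     \<union> {G j | j. 1 \<le> j \<and> j \<le> n}"

definition tvb_rels :: "nat \<Rightarrow> (tvb_gen word \<times> tvb_gen word) set" where
  "tvb_rels n =
     {(gw (S i) @ gw (S (i+1)) @ gw (S i), gw (S (i+1)) @ gw (S i) @ gw (S (i+1))) | i.
        1 \<le> i \<and> i \<le> n - 2}
   \<union> {(gw (S i) @ gw (S j), gw (S j) @ gw (S i)) | i j.
        1 \<le> i \<and> i \<le> n - 1 \<and> 1 \<le> j \<and> j \<le> n - 1 \<and> (i + 2 \<le> j \<or> j + 2 \<le> i)}
   \<union> {(gw (Rh i) @ gw (Rh i), []) | i. 1 \<le> i \<and> i \<le> n - 1}
   \<union> {(gw (Rh i) @ gw (Rh j), gw (Rh j) @ gw (Rh i)) | i j.
        1 \<le> i \<and> i \<le> n - 1 \<and> 1 \<le> j \<and> j \<le> n - 1 \<and> (i + 2 \<le> j \<or> j + 2 \<le> i)}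
   \<union> {(gw (Rh i) @ gw (Rh (i+1)) @ gw (Rh i), gw (Rh (i+1)) @ gw (Rh i) @ gw (Rh (i+1))) | i.
        1 \<le> i \<and> i \<le> n - 2}
   \<union> {(gw (S i) @ gw (Rh j), gw (Rh j) @ gw (S i)) | i j.
        1 \<le> i \<and> i \<le> n - 1 \<and> 1 \<le> j \<and> j \<le> n - 1 \<and> (i + 2 \<le> j \<or> j + 2 \<le> i)}
   \<union> {(gw (Rh i) @ gw (Rh (i+1)) @ gw (S i), gw (S (i+1)) @ gw (Rh i) @ gw (Rh (i+1))) | i.
        1 \<le> i \<and> i \<le> n - 2}
   \<union> {(gw (G i) @ gw (G i), []) | i. 1 \<le> i \<and> i \<le> n}
   \<union> {(gw (G i) @ gw (G j), gw (G j) @ gw (G i)) | i j. 1 \<le> i \<and> i \<le> n \<and> 1 \<le> j \<and> j \<le> n}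
   \<union> {(gw (G j) @ gw (Rh i), gw (Rh i) @ gw (G j)) | i j.
        1 \<le> i \<and> i \<le> n - 1 \<and> 1 \<le> j \<and> j \<le> n \<and> j \<noteq> i \<and> j \<noteq> i + 1}
   \<union> {(gw (G j) @ gw (S i), gw (S i) @ gw (G j)) | i j.
        1 \<le> i \<and> i \<le> n - 1 \<and> 1 \<le> j \<and> j \<le> n \<and> j \<noteq> i \<and> j \<noteq> i + 1}
   \<union> {(gw (Rh i) @ gw (G i), gw (G (i+1)) @ gw (Rh i)) | i. 1 \<le> i \<and> i \<le> n - 1}
   \<union> {(gw (Rh i) @ gw (S i) @ gw (Rh i),
        gw (G (i+1)) @ gw (G i) @ gw (S i) @ gw (G i) @ gw (G (i+1))) | i. 1 \<le> i \<and> i \<le> n - 1}"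

definition TVB :: "nat \<Rightarrow> tvb_gen word set monoid" where
  "TVB n = pres_group (tvb_gens n) (tvb_rels n)"

definition tvb_el :: "nat \<Rightarrow> tvb_gen word \<Rightarrow> tvb_gen word set" where
  "tvb_el n w = wclass (tvb_rels n) w"

fun letter_perm :: "tvb_gen \<Rightarrow> nat \<Rightarrow> nat" where
  "letter_perm (S i) = (\<lambda>x. if x = i then i + 1 else if x = i + 1 then i else x)"
| "letter_perm (Rh i) = (\<lambda>x. if x = i then i + 1 else if x = i + 1 then i else x)"
| "letter_perm (G j) = id"

definition perm_word :: "tvb_gen word \<Rightarrow> nat \<Rightarrow> nat" where
  "perm_word w = foldr (\<lambda>(g, b) p. letter_perm g \<circ> p) w id"

text \<open>TVP_n = ker phi_P (transpositions are involutions, so inverse letters map to the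
  same transposition).\<close>
definition TVP :: "nat \<Rightarrow> tvb_gen word set set" where
  "TVP n = {x \<in> carrier (TVB n). \<exists>w. set w \<subseteq> tvb_gens n \<times> UNIV \<and> x = tvb_el n w
              \<and> perm_word w = id}"

definition rhos :: "nat \<Rightarrow> nat \<Rightarrow> tvb_gen word" where
  "rhos i j = map (\<lambda>k. (Rh k, True)) (rev [i+1..<j])"

definition lam_up :: "nat \<Rightarrow> tvb_gen word" where
  "lam_up i = [(Rh i, True), (S i, False)]"

definition lam_down :: "nat \<Rightarrow> tvb_gen word" where
  "lam_down i = [(Rh i, True)] @ lam_up i @ [(Rh i, True)]"

definition lam_word :: "nat \<Rightarrow> nat \<Rightarrow> tvb_gen word" where
  "lam_word k l = (if k < l then rhos k l @ lam_up k @ rev (rhos k l)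
                   else rhos l k @ lam_down l @ rev (rhos l k))"

definition lam_el :: "nat \<Rightarrow> nat \<Rightarrow> nat \<Rightarrow> tvb_gen word set" where
  "lam_el n k l = tvb_el n (lam_word k l)"

definition gamma_el :: "nat \<Rightarrow> nat \<Rightarrow> tvb_gen word set" where
  "gamma_el n j = tvb_el n (gw (G j))"

definition vp_gens :: "nat \<Rightarrow> (nat \<times> nat) set" where
  "vp_gens n = {(i, j). 1 \<le> i \<and> i \<le> n \<and> 1 \<le> j \<and> j \<le> n \<and> i \<noteq> j}"

definition vp_rels :: "nat \<Rightarrow> ((nat \<times> nat) word \<times> (nat \<times> nat) word) set" where
  "vp_rels n =
     {(gw (i, j) @ gw (k, l), gw (k, l) @ gw (i, j)) | i j k l.
        i \<in> {1..n} \<and> j \<in> {1..n} \<and> k \<in> {1..n} \<and> l \<in> {1..n} \<and> distinct [i, j, k, l]}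
   \<union> {(gw (k, i) @ gw (k, j) @ gw (i, j), gw (i, j) @ gw (k, j) @ gw (k, i)) | i j k.
        i \<in> {1..n} \<and> j \<in> {1..n} \<and> k \<in> {1..n} \<and> distinct [i, j, k]}"

definition VP :: "nat \<Rightarrow> (nat \<times> nat) word set monoid" where
  "VP n = pres_group (vp_gens n) (vp_rels n)"

definition vp_gen :: "nat \<Rightarrow> nat \<Rightarrow> nat \<Rightarrow> (nat \<times> nat) word set" where
  "vp_gen n k l = wclass (vp_rels n) (gw (k, l))"

end

theory Submission
  imports Defs
begin

text \<open>Substituting for the generator lambda_kl of VP_n the word of lambda_kl in TVB_n respects
  the defining relations of VP_n, so it induces a homomorphism. It suffices to check the relations
  for the indices (1, 2, 3, 4) and (1, 2, 3): conjugation by rho_m permutes the lambda_kl as the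
  transposition (m m+1) permutes their indices, and adjacent transpositions carry any tuple of
  distinct indices to these.

  Injectivity comes from a left inverse. TVB_n acts on triples (twisted strands, permutation of
  the strands, word in VP_n) through an action respecting its relations, in which every crossing
  sigma_i^{-1} records the lambda of the two strands it crosses; the word of lambda_kl then acts by
  appending the letter lambda_kl. The image lies in TVP_n since every lambda_kl induces the trivial
  permutation, and it is the subgroup generated by the lambda_kl.\<close>

section \<open>Presented groups and word substitutions\<close>

declare word_eq.refl [simp] word_eq.trans [trans]

lemma word_eq_context: "word_eq R u v \<Longrightarrow> word_eq R (a @ u @ b) (a @ v @ b)"
proof (induction rule: word_eq.induct)
  case (sym u v)
  then show ?case by (blast intro: word_eq.sym)
next
  case (trans u v w)
  then show ?case by (blast intro: word_eq.trans)
next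
  case (cancel u x y v)
  show ?case
    using word_eq.cancel[of R "a @ u" x y "v @ b"] by simp
next
  case (rel l r u v)
  show ?case
    using word_eq.rel[OF rel, of "a @ u" "v @ b"] by simp
qed simp

lemma word_eq_append: "word_eq R u u' \<Longrightarrow> word_eq R v v' \<Longrightarrow> word_eq R (u @ v) (u' @ v')"
  using word_eq_context[of R u u' "[]" v] word_eq_context[of R v v' u' "[]"]
  by (simp add: word_eq.trans)

lemma word_eq_relI: "(l, r) \<in> R \<Longrightarrow> word_eq R l r"
  using word_eq.rel[of l r R "[]" "[]"] by simp

lemma word_eq_cancel_pair: "word_eq R [(g, b), (g, \<not> b)] []"
  using word_eq.cancel[of R "[]" g b "[]"] by simp

lemma winv_Nil [simp]: "winv [] = []"
  by (simp add: winv_def)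

lemma winv_Cons [simp]: "winv ((g, b) # w) = winv w @ [(g, \<not> b)]"
  by (simp add: winv_def)

lemma winv_append [simp]: "winv (u @ v) = winv v @ winv u"
  by (simp add: winv_def)

lemma winv_winv [simp]: "winv (winv w) = w"
  by (induct w) (auto simp: winv_def)

lemma set_winv [simp]: "set (winv w) = (\<lambda>(g, b). (g, \<not> b)) ` set w"
  by (simp add: winv_def)

lemma word_eq_append_winv: "word_eq R (w @ winv w) []"
proof (induct w)
  case (Cons x w)
  obtain g b where x: "x = (g, b)" by fastforce
  have "word_eq R ([(g, b)] @ (w @ winv w) @ [(g, \<not> b)]) ([(g, b)] @ [] @ [(g, \<not> b)])"
    using Cons by (rule word_eq_context)
  then show ?case
    using word_eq_cancel_pair[of R g b] by (auto simp: x intro: word_eq.trans)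
qed simp

lemma word_eq_winv_append: "word_eq R (winv w @ w) []"
  using word_eq_append_winv[of R "winv w"] by simp

lemma word_eq_winv: "word_eq R u v \<Longrightarrow> word_eq R (winv u) (winv v)"
proof -
  assume uv: "word_eq R u v"
  have "word_eq R (winv u) (winv u @ v @ winv v)"
    using word_eq.sym[OF word_eq_append[OF word_eq.refl word_eq_append_winv, of R "winv u" v]] by simp
  also have "word_eq R \<dots> (winv u @ u @ winv v)"
    using word_eq_context[OF uv, of "winv u" "winv v"] by (rule word_eq.sym)
  also have "word_eq R \<dots> (winv v)"
    using word_eq_append[OF word_eq_winv_append word_eq.refl, of R u "winv v"] by simp
  finally show ?thesis .
qed

lemma word_eq_commute_winv:
  assumes "word_eq R (u @ v) (v @ u)"
  shows "word_eq R (winv u @ v) (v @ winv u)"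
proof -
  have "word_eq R (winv u @ v) (winv u @ v @ u @ winv u)"
    using word_eq.sym[OF word_eq_context[OF word_eq_append_winv[of R u], of "winv u @ v" "[]"]] by simp
  also have "word_eq R \<dots> (winv u @ u @ v @ winv u)"
    using word_eq.sym[OF word_eq_context[OF assms, of "winv u" "winv u"]] by simp
  also have "word_eq R \<dots> (v @ winv u)"
    using word_eq_context[OF word_eq_winv_append[of R u], of "[]" "v @ winv u"] by simp
  finally show ?thesis .
qed

lemma word_eq_commute_append:
  assumes "word_eq R (x # u) (u @ [x])" and "word_eq R (x # v) (v @ [x])"
  shows "word_eq R (x # u @ v) (u @ v @ [x])"
proof -
  have "word_eq R (x # u @ v) (u @ x # v)"
    using word_eq_context[OF assms(1), of "[]" v] by simp
  also have "word_eq R \<dots> (u @ v @ [x])"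
    using word_eq_context[OF assms(2), of u "[]"] by simp
  finally show ?thesis .
qed

lemma mem_wclass_iff: "v \<in> wclass R w \<longleftrightarrow> word_eq R v w"
  by (simp add: wclass_def)

lemma wclass_eq_iff: "wclass R u = wclass R v \<longleftrightarrow> word_eq R u v"
  by (auto simp: wclass_def intro: word_eq.trans word_eq.sym)

lemma carrier_pres_group: "carrier (pres_group Gs R) = {wclass R w | w. set w \<subseteq> Gs \<times> UNIV}"
  by (simp add: pres_group_def monoid.defs)

lemma one_pres_group: "\<one>\<^bsub>pres_group Gs R\<^esub> = wclass R []"
  by (simp add: pres_group_def monoid.defs)

lemma mult_pres_group: "wclass R u \<otimes>\<^bsub>pres_group Gs R\<^esub> wclass R v = wclass R (u @ v)"
proof -
  have "{x. \<exists>a\<in>wclass R u. \<exists>b\<in>wclass R v. word_eq R x (a @ b)} = wclass R (u @ v)"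
  proof safe
    fix x a b
    assume "a \<in> wclass R u" "b \<in> wclass R v" "word_eq R x (a @ b)"
    then show "x \<in> wclass R (u @ v)"
      by (auto simp: mem_wclass_iff intro: word_eq.trans word_eq_append)
  next
    fix x
    assume "x \<in> wclass R (u @ v)"
    then show "\<exists>a\<in>wclass R u. \<exists>b\<in>wclass R v. word_eq R x (a @ b)"
      by (metis mem_wclass_iff word_eq.refl)
  qed
  then show ?thesis
    by (simp add: pres_group_def monoid.defs)
qed

lemma pres_group_elim:
  assumes "x \<in> carrier (pres_group Gs R)"
  obtains w where "x = wclass R w" "set w \<subseteq> Gs \<times> UNIV"
  using assms by (auto simp: carrier_pres_group)

lemma group_pres_group: "group (pres_group Gs R)"
proof (rule groupI)
  fix x y
  assume "x \<in> carrier (pres_group Gs R)" "y \<in> carrier (pres_group Gs R)"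
  then show "x \<otimes>\<^bsub>pres_group Gs R\<^esub> y \<in> carrier (pres_group Gs R)"
    by (elim pres_group_elim) (auto simp: mult_pres_group carrier_pres_group intro!: exI)
next
  fix x
  assume "x \<in> carrier (pres_group Gs R)"
  then obtain w where w: "x = wclass R w" "set w \<subseteq> Gs \<times> UNIV"
    by (rule pres_group_elim)
  have "wclass R (winv w) \<in> carrier (pres_group Gs R)"
    using w(2) by (auto simp: carrier_pres_group intro!: exI[of _ "winv w"])
  moreover have "wclass R (winv w) \<otimes>\<^bsub>pres_group Gs R\<^esub> x = \<one>\<^bsub>pres_group Gs R\<^esub>"
    by (simp add: w mult_pres_group one_pres_group wclass_eq_iff word_eq_winv_append)
  ultimately show "\<exists>y\<in>carrier (pres_group Gs R). y \<otimes>\<^bsub>pres_group Gs R\<^esub> x = \<one>\<^bsub>pres_group Gs R\<^esub>"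
    by blast
qed (auto simp: carrier_pres_group mult_pres_group one_pres_group)

lemma inv_pres_group:
  assumes "set w \<subseteq> Gs \<times> UNIV"
  shows "inv\<^bsub>pres_group Gs R\<^esub> (wclass R w) = wclass R (winv w)"
proof -
  interpret group "pres_group Gs R"
    by (rule group_pres_group)
  have "wclass R (winv w) \<otimes>\<^bsub>pres_group Gs R\<^esub> wclass R w = \<one>\<^bsub>pres_group Gs R\<^esub>"
    by (simp add: mult_pres_group one_pres_group wclass_eq_iff word_eq_winv_append)
  moreover have "wclass R w \<in> carrier (pres_group Gs R)"
    using assms by (auto simp: carrier_pres_group)
  moreover have "wclass R (winv w) \<in> carrier (pres_group Gs R)"
    using assms by (auto simp: carrier_pres_group intro!: exI[of _ "winv w"])
  ultimately show ?thesis
    by (rule inv_equality)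
qed

lemma carrier_pres_group_generate:
  "carrier (pres_group Gs R) = generate (pres_group Gs R) {wclass R (gw g) | g. g \<in> Gs}"
  (is "_ = generate ?G ?X")
proof
  interpret group ?G
    by (rule group_pres_group)
  have "wclass R w \<in> generate ?G ?X" if "set w \<subseteq> Gs \<times> UNIV" for w
    using that
  proof (induct w)
    case Nil
    show ?case
      using generate.one[of ?G ?X] by (simp add: one_pres_group)
  next
    case (Cons x w)
    obtain g b where x: "x = (g, b)" by fastforce
    have g: "g \<in> Gs" and w: "set w \<subseteq> Gs \<times> UNIV"
      using Cons.prems x by auto
    have "wclass R [(g, b)] \<in> generate ?G ?X"
    proof (cases b)
      case True
      then show ?thesis
        using g by (auto simp: gw_def intro: generate.incl)
    next
      case False
      then have "wclass R [(g, b)] = inv\<^bsub>?G\<^esub> (wclass R (gw g))"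
        using g by (simp add: gw_def inv_pres_group)
      then show ?thesis
        using g by (auto intro: generate.inv)
    qed
    from generate.eng[OF this Cons.hyps[OF w]] show ?case
      by (simp add: x mult_pres_group)
  qed
  then show "carrier ?G \<subseteq> generate ?G ?X"
    by (auto simp: carrier_pres_group)
  have "?X \<subseteq> carrier ?G"
    by (auto simp: carrier_pres_group gw_def)
  then show "generate ?G ?X \<subseteq> carrier ?G"
    using generate_in_carrier by blast
qed

definition wsubst :: "('g \<Rightarrow> 'h word) \<Rightarrow> 'g word \<Rightarrow> 'h word" where
  "wsubst \<phi> w = concat (map (\<lambda>(g, b). if b then \<phi> g else winv (\<phi> g)) w)"

lemma wsubst_simps [simp]:
  "wsubst \<phi> [] = []"
  "wsubst \<phi> ((g, b) # w) = (if b then \<phi> g else winv (\<phi> g)) @ wsubst \<phi> w"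
  "wsubst \<phi> (u @ v) = wsubst \<phi> u @ wsubst \<phi> v"
  by (simp_all add: wsubst_def)

lemma word_eq_wsubst:
  assumes "\<And>l r. (l, r) \<in> R \<Longrightarrow> word_eq R' (wsubst \<phi> l) (wsubst \<phi> r)"
  shows "word_eq R u v \<Longrightarrow> word_eq R' (wsubst \<phi> u) (wsubst \<phi> v)"
proof (induction rule: word_eq.induct)
  case (sym u v)
  then show ?case by (blast intro: word_eq.sym)
next
  case (trans u v w)
  then show ?case by (blast intro: word_eq.trans)
next
  case (cancel u g b v)
  have "word_eq R' (wsubst \<phi> [(g, b), (g, \<not> b)]) []"
    by (cases b) (simp_all add: word_eq_append_winv word_eq_winv_append)
  then show ?case
    using word_eq_context by fastforce
next
  case (rel l r u v)
  then show ?case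
    using word_eq_context[OF assms] by simp
qed simp

text \<open>The substitution is applied to an arbitrary representative of a class; this is well defined
  once the substitution respects the relations, as assumed in the locale below.\<close>
definition subst_hom :: "('g word \<times> 'g word) set \<Rightarrow> ('h word \<times> 'h word) set \<Rightarrow>
    ('g \<Rightarrow> 'h word) \<Rightarrow> 'g word set \<Rightarrow> 'h word set" where
  "subst_hom R R' \<phi> A = wclass R' (wsubst \<phi> (SOME u. u \<in> A))"

locale word_substitution =
  fixes Gs :: "'g set" and R :: "('g word \<times> 'g word) set"
    and Hs :: "'h set" and R' :: "('h word \<times> 'h word) set"
    and \<phi> :: "'g \<Rightarrow> 'h word"
  assumes subst_gens: "g \<in> Gs \<Longrightarrow> set (\<phi> g) \<subseteq> Hs \<times> UNIV"
    and subst_rels: "(l, r) \<in> R \<Longrightarrow> word_eq R' (wsubst \<phi> l) (wsubst \<phi> r)"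
begin

lemma subst_hom_wclass: "subst_hom R R' \<phi> (wclass R u) = wclass R' (wsubst \<phi> u)"
proof -
  have "(SOME v. v \<in> wclass R u) \<in> wclass R u"
    by (rule someI[of _ u]) (simp add: mem_wclass_iff)
  then show ?thesis
    by (simp add: subst_hom_def wclass_eq_iff mem_wclass_iff word_eq_wsubst[OF subst_rels])
qed

lemma set_wsubst: "set w \<subseteq> Gs \<times> UNIV \<Longrightarrow> set (wsubst \<phi> w) \<subseteq> Hs \<times> UNIV"
proof (induct w)
  case (Cons x w)
  then obtain g b where "x = (g, b)" "g \<in> Gs"
    by auto
  then show ?case
    using Cons subst_gens[of g] by auto
qed simp

lemma subst_hom_hom: "subst_hom R R' \<phi> \<in> hom (pres_group Gs R) (pres_group Hs R')"
proof (rule homI)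
  fix x
  assume "x \<in> carrier (pres_group Gs R)"
  then show "subst_hom R R' \<phi> x \<in> carrier (pres_group Hs R')"
    by (elim pres_group_elim) (auto simp: carrier_pres_group subst_hom_wclass dest: set_wsubst)
next
  fix x y
  assume "x \<in> carrier (pres_group Gs R)" "y \<in> carrier (pres_group Gs R)"
  then show "subst_hom R R' \<phi> (x \<otimes>\<^bsub>pres_group Gs R\<^esub> y) =
      subst_hom R R' \<phi> x \<otimes>\<^bsub>pres_group Hs R'\<^esub> subst_hom R R' \<phi> y"
    by (elim pres_group_elim) (simp add: subst_hom_wclass mult_pres_group)
qed

end

section \<open>Consequences of the relations of TVB_n\<close>

abbreviation tvb_eq :: "nat \<Rightarrow> tvb_gen word \<Rightarrow> tvb_gen word \<Rightarrow> bool" where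
  "tvb_eq n \<equiv> word_eq (tvb_rels n)"

abbreviation rho :: "nat \<Rightarrow> tvb_gen \<times> bool" where
  "rho i \<equiv> (Rh i, True)"

abbreviation sigma :: "nat \<Rightarrow> tvb_gen \<times> bool" where
  "sigma i \<equiv> (S i, True)"

abbreviation sigma_inv :: "nat \<Rightarrow> tvb_gen \<times> bool" where
  "sigma_inv i \<equiv> (S i, False)"

abbreviation adj_swap :: "nat \<Rightarrow> nat \<Rightarrow> nat" where
  "adj_swap m \<equiv> Transposition.transpose m (Suc m)"

lemma rho_rho: "i \<in> {1..<n} \<Longrightarrow> tvb_eq n [rho i, rho i] []"
  by (rule word_eq_relI) (auto simp: tvb_rels_def gw_def)

lemma rho_commute:
  "i \<in> {1..<n} \<Longrightarrow> j \<in> {1..<n} \<Longrightarrow> i + 2 \<le> j \<or> j + 2 \<le> i \<Longrightarrow> tvb_eq n [rho i, rho j] [rho j, rho i]"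
  by (rule word_eq_relI) (auto simp: tvb_rels_def gw_def)

lemma rho_braid:
  "1 \<le> i \<Longrightarrow> i + 2 \<le> n \<Longrightarrow> tvb_eq n [rho i, rho (i+1), rho i] [rho (i+1), rho i, rho (i+1)]"
  by (rule word_eq_relI) (auto simp: tvb_rels_def gw_def)

lemma sigma_commute:
  "i \<in> {1..<n} \<Longrightarrow> j \<in> {1..<n} \<Longrightarrow> i + 2 \<le> j \<or> j + 2 \<le> i \<Longrightarrow> tvb_eq n [sigma i, sigma j] [sigma j, sigma i]"
  by (rule word_eq_relI) (auto simp: tvb_rels_def gw_def)

lemma sigma_rho_commute:
  "i \<in> {1..<n} \<Longrightarrow> j \<in> {1..<n} \<Longrightarrow> i + 2 \<le> j \<or> j + 2 \<le> i \<Longrightarrow> tvb_eq n [sigma i, rho j] [rho j, sigma i]"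
  by (rule word_eq_relI) (auto simp: tvb_rels_def gw_def)

lemma sigma_braid:
  "1 \<le> i \<Longrightarrow> i + 2 \<le> n \<Longrightarrow> tvb_eq n [sigma i, sigma (i+1), sigma i] [sigma (i+1), sigma i, sigma (i+1)]"
  by (rule word_eq_relI) (auto simp: tvb_rels_def gw_def)

lemma rho_rho_sigma:
  "1 \<le> i \<Longrightarrow> i + 2 \<le> n \<Longrightarrow> tvb_eq n [rho i, rho (i+1), sigma i] [sigma (i+1), rho i, rho (i+1)]"
  by (rule word_eq_relI) (auto simp: tvb_rels_def gw_def)

lemma rho_inv:
  assumes "i \<in> {1..<n}"
  shows "tvb_eq n [(Rh i, False)] [rho i]"
proof -
  have "tvb_eq n [(Rh i, False)] [(Rh i, False), rho i, rho i]"
    using word_eq.sym[OF word_eq_context[OF rho_rho[OF assms], of "[(Rh i, False)]" "[]"]] by simp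
  also have "tvb_eq n \<dots> [rho i]"
    using word_eq_context[OF word_eq_cancel_pair[of "tvb_rels n" "Rh i" False], of "[]" "[rho i]"] by simp
  finally show ?thesis .
qed

lemma sigma_inv_rho_commute:
  "i \<in> {1..<n} \<Longrightarrow> j \<in> {1..<n} \<Longrightarrow> i + 2 \<le> j \<or> j + 2 \<le> i
    \<Longrightarrow> tvb_eq n [sigma_inv i, rho j] [rho j, sigma_inv i]"
  using word_eq_commute_winv[of _ "[sigma i]" "[rho j]"] sigma_rho_commute[of i n j] by simp

lemma sigma_inv_commute:
  assumes "i \<in> {1..<n}" "j \<in> {1..<n}" "i + 2 \<le> j \<or> j + 2 \<le> i"
  shows "tvb_eq n [sigma_inv i, sigma_inv j] [sigma_inv j, sigma_inv i]"
proof -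
  have "tvb_eq n [sigma_inv i, sigma j] [sigma j, sigma_inv i]"
    using word_eq_commute_winv[of _ "[sigma i]" "[sigma j]"] sigma_commute[OF assms] by simp
  from word_eq.sym[OF this] have "tvb_eq n ([sigma j] @ [sigma_inv i]) ([sigma_inv i] @ [sigma j])"
    by simp
  from word_eq_commute_winv[OF this] have "tvb_eq n [sigma_inv j, sigma_inv i] [sigma_inv i, sigma_inv j]"
    by simp
  then show ?thesis
    by (rule word_eq.sym)
qed

lemma sigma_inv_braid:
  "1 \<le> i \<Longrightarrow> i + 2 \<le> n
    \<Longrightarrow> tvb_eq n [sigma_inv i, sigma_inv (i+1), sigma_inv i] [sigma_inv (i+1), sigma_inv i, sigma_inv (i+1)]"
  using word_eq_winv[OF sigma_braid[of i n]] by simp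

lemma sigma_inv_shift_up:
  assumes "1 \<le> i" "i + 2 \<le> n"
  shows "tvb_eq n [sigma_inv i, rho (i+1), rho i] [rho (i+1), rho i, sigma_inv (i+1)]"
proof -
  have r: "tvb_eq n [(Rh (i+1), False), (Rh i, False)] [rho (i+1), rho i]"
    using word_eq_append[OF rho_inv rho_inv, of "i+1" n i] assms by simp
  have "tvb_eq n [sigma_inv i, rho (i+1), rho i] [sigma_inv i, (Rh (i+1), False), (Rh i, False)]"
    using word_eq.sym[OF word_eq_context[OF r, of "[sigma_inv i]" "[]"]] by simp
  also have "tvb_eq n \<dots> [(Rh (i+1), False), (Rh i, False), sigma_inv (i+1)]"
    using word_eq_winv[OF rho_rho_sigma[OF assms]] by simp
  also have "tvb_eq n \<dots> [rho (i+1), rho i, sigma_inv (i+1)]"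
    using word_eq_context[OF r, of "[]" "[sigma_inv (i+1)]"] by simp
  finally show ?thesis .
qed

lemma sigma_inv_shift_down:
  assumes "1 \<le> i" "i + 2 \<le> n"
  shows "tvb_eq n [sigma_inv (i+1), rho i, rho (i+1)] [rho i, rho (i+1), sigma_inv i]"
proof -
  have rr: "tvb_eq n [rho i, rho i] []" "tvb_eq n [rho (i+1), rho (i+1)] []"
    using assms by (simp_all add: rho_rho)
  have "tvb_eq n [rho i, rho (i+1), sigma_inv i] [rho i, rho (i+1), sigma_inv i, rho (i+1), rho (i+1)]"
    using word_eq.sym[OF word_eq_context[OF rr(2), of "[rho i, rho (i+1), sigma_inv i]" "[]"]] by simp
  also have "tvb_eq n \<dots> [rho i, rho (i+1), sigma_inv i, rho (i+1), rho i, rho i, rho (i+1)]"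
    using word_eq.sym[OF word_eq_context[OF rr(1), of "[rho i, rho (i+1), sigma_inv i, rho (i+1)]" "[rho (i+1)]"]]
    by simp
  also have "tvb_eq n \<dots> [rho i, rho (i+1), rho (i+1), rho i, sigma_inv (i+1), rho i, rho (i+1)]"
    using word_eq_context[OF sigma_inv_shift_up[OF assms], of "[rho i, rho (i+1)]" "[rho i, rho (i+1)]"] by simp
  also have "tvb_eq n \<dots> [rho i, rho i, sigma_inv (i+1), rho i, rho (i+1)]"
    using word_eq_context[OF rr(2), of "[rho i]" "[rho i, sigma_inv (i+1), rho i, rho (i+1)]"] by simp
  also have "tvb_eq n \<dots> [sigma_inv (i+1), rho i, rho (i+1)]"
    using word_eq_context[OF rr(1), of "[]" "[sigma_inv (i+1), rho i, rho (i+1)]"] by simp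
  finally show ?thesis
    by (rule word_eq.sym)
qed

lemma winv_map_rho: "set xs \<subseteq> {1..<n} \<Longrightarrow> tvb_eq n (winv (map rho xs)) (map rho (rev xs))"
proof (induct xs)
  case (Cons i xs)
  then have "tvb_eq n (winv (map rho xs) @ [(Rh i, False)]) (map rho (rev xs) @ [rho i])"
    by (intro word_eq_append rho_inv) auto
  then show ?case
    by simp
qed simp

lemma rho_word_rev:
  assumes "set xs \<subseteq> {1..<n}" "set ys \<subseteq> {1..<n}" "tvb_eq n (map rho xs) (map rho ys)"
  shows "tvb_eq n (map rho (rev xs)) (map rho (rev ys))"
proof -
  have "tvb_eq n (map rho (rev xs)) (winv (map rho xs))"
    using winv_map_rho[OF assms(1)] by (rule word_eq.sym)
  also have "tvb_eq n \<dots> (winv (map rho ys))"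
    using word_eq_winv[OF assms(3)] .
  also have "tvb_eq n \<dots> (map rho (rev ys))"
    using winv_map_rho[OF assms(2)] .
  finally show ?thesis .
qed

lemma rho_commute_map:
  "m \<in> {1..<n} \<Longrightarrow> \<forall>i\<in>set xs. i \<in> {1..<n} \<and> (i + 2 \<le> m \<or> m + 2 \<le> i)
    \<Longrightarrow> tvb_eq n (rho m # map rho xs) (map rho xs @ [rho m])"
proof (induct xs)
  case (Cons i xs)
  then have "tvb_eq n (rho m # [rho i]) ([rho i] @ [rho m])"
    by (auto intro: rho_commute)
  with Cons show ?case
    using word_eq_commute_append[of _ "rho m" "[rho i]" "map rho xs"] by simp
qed simp

lemma rhos_eq: "rhos a b = map rho (rev [a+1..<b])"
  by (simp add: rhos_def)

lemma rev_rhos: "rev (rhos a b) = map rho [a+1..<b]"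
  by (simp add: rhos_def rev_map)

lemma rhos_Suc: "a + 1 \<le> b \<Longrightarrow> rhos a (Suc b) = rho b # rhos a b"
  by (simp add: rhos_def)

lemma rhos_Suc_left: "a + 2 \<le> b \<Longrightarrow> rhos a b = rhos (Suc a) b @ [rho (Suc a)]"
  by (simp add: rhos_def upt_rec)

lemma rhos_empty: "b \<le> a + 1 \<Longrightarrow> rhos a b = []"
  by (simp add: rhos_def)

lemma rho_commute_rhos:
  "m \<in> {1..<n} \<Longrightarrow> b \<le> n \<Longrightarrow> m + 1 \<le> a \<or> b + 1 \<le> m \<Longrightarrow> tvb_eq n (rho m # rhos a b) (rhos a b @ [rho m])"
  unfolding rhos_eq by (rule rho_commute_map) auto

lemma rho_commute_rev_rhos:
  "m \<in> {1..<n} \<Longrightarrow> b \<le> n \<Longrightarrow> m + 1 \<le> a \<or> b + 1 \<le> m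
    \<Longrightarrow> tvb_eq n (rho m # rev (rhos a b)) (rev (rhos a b) @ [rho m])"
  unfolding rev_rhos by (rule rho_commute_map) auto

text \<open>Pushing rho_m through the ladder rho_{b-1} ... rho_{a+1} raises its index by one; the braid
  relation does this where the ladder passes m + 1 and m.\<close>
lemma rho_rhos_shift:
  assumes "a + 1 \<le> m" "m + 2 \<le> b" "b \<le> n"
  shows "tvb_eq n (rho m # rhos a b) (rhos a b @ [rho (m+1)])"
proof -
  obtain k where b: "b = m + 2 + k"
    using assms(2) le_Suc_ex by blast
  have "m + 2 + k \<le> n \<Longrightarrow> tvb_eq n (rho m # rhos a (m+2+k)) (rhos a (m+2+k) @ [rho (m+1)])"
  proof (induct k)
    case 0
    have e: "rhos a (m+2) = rho (m+1) # rho m # rhos a m"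
      using assms(1) by (simp add: rhos_Suc)
    have "tvb_eq n ([rho m, rho (m+1), rho m] @ rhos a m) ([rho (m+1), rho m, rho (m+1)] @ rhos a m)"
      using word_eq_context[OF rho_braid[of m n], of "[]" "rhos a m"] assms(1) 0 by simp
    also have "tvb_eq n \<dots> ([rho (m+1), rho m] @ rhos a m @ [rho (m+1)])"
      using word_eq_context[OF rho_commute_rhos[of "m+1" n m a], of "[rho (m+1), rho m]" "[]"] assms(1) 0
      by simp
    finally show ?case
      using e by simp
  next
    case (Suc k)
    have e: "rhos a (m + 2 + Suc k) = rho (m+2+k) # rhos a (m+2+k)"
      using assms(1) by (simp add: rhos_Suc)
    have "tvb_eq n ([rho m, rho (m+2+k)] @ rhos a (m+2+k)) ([rho (m+2+k), rho m] @ rhos a (m+2+k))"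
      using word_eq_context[OF rho_commute[of m n "m+2+k"], of "[]" "rhos a (m+2+k)"] assms(1) Suc.prems
      by simp
    also have "tvb_eq n \<dots> ([rho (m+2+k)] @ rhos a (m+2+k) @ [rho (m+1)])"
      using word_eq_context[OF Suc.hyps, of "[rho (m+2+k)]" "[]"] Suc.prems by simp
    finally show ?case
      using e by simp
  qed
  then show ?thesis
    using b assms(3) by simp
qed

lemma rho_rev_rhos_shift:
  assumes "a + 1 \<le> m" "m + 2 \<le> b" "b \<le> n"
  shows "tvb_eq n (rho (m+1) # rev (rhos a b)) (rev (rhos a b) @ [rho m])"
proof -
  have "tvb_eq n (map rho (m # rev [a+1..<b])) (map rho (rev [a+1..<b] @ [m+1]))"
    using rho_rhos_shift[OF assms] by (simp add: rhos_eq)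
  then have "tvb_eq n (map rho (rev (m # rev [a+1..<b]))) (map rho (rev (rev [a+1..<b] @ [m+1])))"
    using assms by (intro rho_word_rev) auto
  from word_eq.sym[OF this] show ?thesis
    by (simp add: rhos_eq rev_map)
qed

section \<open>Conjugating the lambda_kl by rho_m\<close>

lemma rho_conj_sym:
  assumes "m \<in> {1..<n}" "tvb_eq n ([rho m] @ x @ [rho m]) y"
  shows "tvb_eq n ([rho m] @ y @ [rho m]) x"
proof -
  have "tvb_eq n ([rho m] @ y @ [rho m]) ([rho m, rho m] @ x @ [rho m, rho m])"
    using word_eq.sym[OF word_eq_context[OF assms(2), of "[rho m]" "[rho m]"]] by simp
  also have "tvb_eq n \<dots> x"
    using word_eq_context[OF rho_rho[OF assms(1)], of "[]" "x @ [rho m, rho m]"]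
      word_eq_context[OF rho_rho[OF assms(1)], of x "[]"]
    by (simp add: word_eq.trans)
  finally show ?thesis .
qed

text \<open>lam_spread Z a b is obtained from Z a by conjugating with rho_{b-1} ... rho_{a+1}; for
  Z = lam_up and Z = lam_down it is lambda_{ab} and lambda_{ba}.\<close>
definition lam_spread :: "(nat \<Rightarrow> tvb_gen word) \<Rightarrow> nat \<Rightarrow> nat \<Rightarrow> tvb_gen word" where
  "lam_spread Z a b = rhos a b @ Z a @ rev (rhos a b)"

lemma lam_spread_Suc: "a < m \<Longrightarrow> lam_spread Z a (Suc m) = [rho m] @ lam_spread Z a m @ [rho m]"
  by (simp add: lam_spread_def rhos_Suc)

locale lam_family =
  fixes n :: nat and Z :: "nat \<Rightarrow> tvb_gen word"
  assumes rho_commute_Z: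
      "a \<in> {1..<n} \<Longrightarrow> m \<in> {1..<n} \<Longrightarrow> m + 2 \<le> a \<or> a + 2 \<le> m \<Longrightarrow> tvb_eq n (rho m # Z a) (Z a @ [rho m])"
    and rho_shift_Z:
      "1 \<le> a \<Longrightarrow> a + 2 \<le> n \<Longrightarrow> tvb_eq n ([rho a, rho (a+1)] @ Z a @ [rho (a+1), rho a]) (Z (a+1))"
begin

lemma rho_conj_spread_fixed:
  assumes ab: "1 \<le> a" "a < b" "b \<le> n" and m: "m \<in> {1..<n}"
    and far: "m + 2 \<le> a \<or> b + 1 \<le> m \<or> (a + 1 \<le> m \<and> m + 2 \<le> b)"
  shows "tvb_eq n ([rho m] @ lam_spread Z a b @ [rho m]) (lam_spread Z a b)"
proof -
  text \<open>Travelling through the ladder, rho_m becomes rho_m', which commutes with Z a.\<close>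
  obtain m' where
    into: "tvb_eq n (rho m # rhos a b) (rhos a b @ [rho m'])" and
    out: "tvb_eq n (rho m' # rev (rhos a b)) (rev (rhos a b) @ [rho m])" and
    Z: "tvb_eq n (rho m' # Z a) (Z a @ [rho m'])"
  proof (cases "a + 1 \<le> m \<and> m + 2 \<le> b")
    case True
    then show ?thesis
      using ab by (intro that[of "m + 1"] rho_rhos_shift rho_rev_rhos_shift rho_commute_Z) auto
  next
    case False
    then show ?thesis
      using ab m far by (intro that[of m] rho_commute_rhos rho_commute_rev_rhos rho_commute_Z) auto
  qed
  have "tvb_eq n ([rho m] @ lam_spread Z a b @ [rho m]) (rhos a b @ [rho m'] @ Z a @ rev (rhos a b) @ [rho m])"
    using word_eq_context[OF into, of "[]" "Z a @ rev (rhos a b) @ [rho m]"] by (simp add: lam_spread_def)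
  also have "tvb_eq n \<dots> (rhos a b @ Z a @ [rho m'] @ rev (rhos a b) @ [rho m])"
    using word_eq_context[OF Z, of "rhos a b" "rev (rhos a b) @ [rho m]"] by simp
  also have "tvb_eq n \<dots> (rhos a b @ Z a @ rev (rhos a b) @ [rho m, rho m])"
    using word_eq_context[OF out, of "rhos a b @ Z a" "[rho m]"] by simp
  also have "tvb_eq n \<dots> (lam_spread Z a b)"
    using word_eq_context[OF rho_rho[OF m], of "rhos a b @ Z a @ rev (rhos a b)" "[]"]
    by (simp add: lam_spread_def)
  finally show ?thesis .
qed

lemma rho_conj_spread_left:
  assumes "1 \<le> a" "a + 2 \<le> b" "b \<le> n"
  shows "tvb_eq n ([rho a] @ lam_spread Z a b @ [rho a]) (lam_spread Z (a+1) b)"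
proof -
  let ?R = "rhos (Suc a) b"
  have a: "a \<in> {1..<n}"
    using assms by simp
  have "[rho a] @ lam_spread Z a b @ [rho a] = [rho a] @ ?R @ [rho (a+1)] @ Z a @ [rho (a+1)] @ rev ?R @ [rho a]"
    using assms by (simp add: lam_spread_def rhos_Suc_left)
  also have "tvb_eq n \<dots> (?R @ [rho a, rho (a+1)] @ Z a @ [rho (a+1)] @ rev ?R @ [rho a])"
    using word_eq_context[OF rho_commute_rhos[OF a, of b "Suc a"], of "[]"] assms by simp
  also have "tvb_eq n \<dots> (?R @ [rho a, rho (a+1)] @ Z a @ [rho (a+1), rho a] @ rev ?R)"
    using word_eq.sym[OF word_eq_context[OF rho_commute_rev_rhos[OF a, of b "Suc a"],
        of "?R @ [rho a, rho (a+1)] @ Z a @ [rho (a+1)]" "[]"]] assms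
    by simp
  also have "tvb_eq n \<dots> (lam_spread Z (a+1) b)"
    using word_eq_context[OF rho_shift_Z, of a ?R "rev ?R"] assms by (simp add: lam_spread_def)
  finally show ?thesis .
qed

lemma rho_conj_spread:
  assumes ab: "1 \<le> a" "a < b" "b \<le> n" and m: "m \<in> {1..<n}" and not_adjacent: "\<not> (m = a \<and> b = a + 1)"
  shows "tvb_eq n ([rho m] @ lam_spread Z a b @ [rho m]) (lam_spread Z (adj_swap m a) (adj_swap m b))"
proof -
  consider "m + 2 \<le> a \<or> b + 1 \<le> m \<or> (a + 1 \<le> m \<and> m + 2 \<le> b)" | "m = b" | "m + 1 = b" "a < m"
    | "m = a" "a + 2 \<le> b" | "m + 1 = a"
    using not_adjacent ab by linarith
  then show ?thesis
  proof cases
    case 1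
    then show ?thesis
      using rho_conj_spread_fixed[OF ab m] ab by (auto simp: transpose_def)
  next
    case 2
    then show ?thesis
      using ab by (simp add: lam_spread_Suc)
  next
    case 3
    then show ?thesis
      using rho_conj_sym[OF m word_eq.refl, of "lam_spread Z a m"] ab by (auto simp: lam_spread_Suc)
  next
    case 4
    then show ?thesis
      using rho_conj_spread_left ab by simp
  next
    case 5
    then show ?thesis
      using rho_conj_sym[OF m rho_conj_spread_left[of m b]] ab m by auto
  qed
qed

end

lemma lam_up_rho_commute:
  assumes "a \<in> {1..<n}" "m \<in> {1..<n}" "m + 2 \<le> a \<or> a + 2 \<le> m"
  shows "tvb_eq n (rho m # lam_up a) (lam_up a @ [rho m])"
proof -
  have "tvb_eq n (rho m # [rho a]) ([rho a] @ [rho m])"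
    using rho_commute[OF assms(2,1)] assms(3) by auto
  moreover have "tvb_eq n (rho m # [sigma_inv a]) ([sigma_inv a] @ [rho m])"
    using word_eq.sym[OF sigma_inv_rho_commute[OF assms(1,2)]] assms(3) by auto
  ultimately show ?thesis
    using word_eq_commute_append by (fastforce simp: lam_up_def)
qed

lemma lam_up_shift:
  assumes "1 \<le> a" "a + 2 \<le> n"
  shows "tvb_eq n ([rho a, rho (a+1)] @ lam_up a @ [rho (a+1), rho a]) (lam_up (a+1))"
proof -
  have "tvb_eq n [rho a, rho (a+1), rho a, sigma_inv a, rho (a+1), rho a]
      [rho a, rho (a+1), rho a, rho (a+1), rho a, sigma_inv (a+1)]"
    using word_eq_context[OF sigma_inv_shift_up[OF assms], of "[rho a, rho (a+1), rho a]" "[]"] by simp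
  also have "tvb_eq n \<dots> [rho (a+1), rho a, rho (a+1), rho (a+1), rho a, sigma_inv (a+1)]"
    using word_eq_context[OF rho_braid[OF assms], of "[]" "[rho (a+1), rho a, sigma_inv (a+1)]"] by simp
  also have "tvb_eq n \<dots> [rho (a+1), rho a, rho a, sigma_inv (a+1)]"
    using word_eq_context[OF rho_rho[of "a+1" n], of "[rho (a+1), rho a]" "[rho a, sigma_inv (a+1)]"] assms
    by simp
  also have "tvb_eq n \<dots> [rho (a+1), sigma_inv (a+1)]"
    using word_eq_context[OF rho_rho[of a n], of "[rho (a+1)]" "[sigma_inv (a+1)]"] assms by simp
  finally show ?thesis
    by (simp add: lam_up_def)
qed

lemma lam_family_lam_up: "lam_family n lam_up"
  by (unfold_locales; blast intro: lam_up_rho_commute lam_up_shift)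

lemma lam_down_eq: "lam_down a = [rho a] @ lam_up a @ [rho a]"
  by (simp add: lam_down_def)

lemma lam_down_rho_commute:
  assumes "a \<in> {1..<n}" "m \<in> {1..<n}" "m + 2 \<le> a \<or> a + 2 \<le> m"
  shows "tvb_eq n (rho m # lam_down a) (lam_down a @ [rho m])"
proof -
  have r: "tvb_eq n (rho m # [rho a]) ([rho a] @ [rho m])"
    using rho_commute[OF assms(2,1)] assms(3) by auto
  have "tvb_eq n (rho m # (lam_up a @ [rho a])) ((lam_up a @ [rho a]) @ [rho m])"
    using word_eq_commute_append[OF lam_up_rho_commute[OF assms] r] by simp
  from word_eq_commute_append[OF r this] show ?thesis
    by (simp add: lam_down_eq)
qed

lemma lam_down_shift:
  assumes "1 \<le> a" "a + 2 \<le> n"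
  shows "tvb_eq n ([rho a, rho (a+1)] @ lam_down a @ [rho (a+1), rho a]) (lam_down (a+1))"
proof -
  have "[rho a, rho (a+1)] @ lam_down a @ [rho (a+1), rho a]
      = [rho a, rho (a+1), rho a] @ lam_up a @ [rho a, rho (a+1), rho a]"
    by (simp add: lam_down_eq)
  also have "tvb_eq n \<dots> ([rho (a+1), rho a, rho (a+1)] @ lam_up a @ [rho a, rho (a+1), rho a])"
    using word_eq_context[OF rho_braid[OF assms], of "[]"] by simp
  also have "tvb_eq n \<dots> ([rho (a+1), rho a, rho (a+1)] @ lam_up a @ [rho (a+1), rho a, rho (a+1)])"
    using word_eq_context[OF rho_braid[OF assms], of "[rho (a+1), rho a, rho (a+1)] @ lam_up a" "[]"] by simp
  also have "tvb_eq n \<dots> ([rho (a+1)] @ lam_up (a+1) @ [rho (a+1)])"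
    using word_eq_context[OF lam_up_shift[OF assms], of "[rho (a+1)]" "[rho (a+1)]"] by simp
  finally show ?thesis
    by (simp add: lam_down_eq)
qed

lemma lam_family_lam_down: "lam_family n lam_down"
  by (unfold_locales; blast intro: lam_down_rho_commute lam_down_shift)

lemma lam_word_spread: "lam_word a b = (if a < b then lam_spread lam_up a b else lam_spread lam_down b a)"
  by (simp add: lam_word_def lam_spread_def)

lemma adj_swap_less: "a < b \<Longrightarrow> \<not> (m = a \<and> b = a + 1) \<Longrightarrow> adj_swap m a < adj_swap m b"
  by (auto simp: transpose_def)

lemma rho_conj_lam_word:
  assumes "a \<in> {1..n}" "b \<in> {1..n}" "a \<noteq> b" and m: "m \<in> {1..<n}"
  shows "tvb_eq n ([rho m] @ lam_word a b @ [rho m]) (lam_word (adj_swap m a) (adj_swap m b))"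
proof (cases "a < b")
  case ab: True
  show ?thesis
  proof (cases "m = a \<and> b = a + 1")
    case True
    then show ?thesis
      by (simp add: lam_word_spread lam_spread_def rhos_empty lam_down_eq)
  next
    case False
    then show ?thesis
      using lam_family.rho_conj_spread[OF lam_family_lam_up[of n], of a b m] adj_swap_less[OF ab False] assms ab
      by (simp add: lam_word_spread)
  qed
next
  case False
  then have ba: "b < a"
    using assms by simp
  show ?thesis
  proof (cases "m = b \<and> a = b + 1")
    case True
    then show ?thesis
      using rho_conj_sym[OF m word_eq.refl, of "lam_up b"]
      by (simp add: lam_word_spread lam_spread_def rhos_empty lam_down_eq)
  next
    case False
    then show ?thesis
      using lam_family.rho_conj_spread[OF lam_family_lam_down[of n], of b a m] adj_swap_less[OF ba False] assms ba
      by (simp add: lam_word_spread)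
  qed
qed

section \<open>The relations of VP_n among the lambda_kl\<close>

lemma rho_conj_append:
  assumes "m \<in> {1..<n}" "tvb_eq n ([rho m] @ u @ [rho m]) u'" "tvb_eq n ([rho m] @ v @ [rho m]) v'"
  shows "tvb_eq n ([rho m] @ (u @ v) @ [rho m]) (u' @ v')"
proof -
  have "tvb_eq n ([rho m] @ (u @ v) @ [rho m]) (([rho m] @ u @ [rho m]) @ ([rho m] @ v @ [rho m]))"
    using word_eq.sym[OF word_eq_context[OF rho_rho[OF assms(1)], of "[rho m] @ u" "v @ [rho m]"]] by simp
  also have "tvb_eq n \<dots> (u' @ v')"
    using word_eq_append[OF assms(2,3)] .
  finally show ?thesis .
qed

lemma rho_conj_word_eq:
  assumes "tvb_eq n u v" "tvb_eq n ([rho m] @ u @ [rho m]) u'" "tvb_eq n ([rho m] @ v @ [rho m]) v'"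
  shows "tvb_eq n u' v'"
  using word_eq.sym[OF assms(2)] word_eq_context[OF assms(1)] assms(3) by (blast intro: word_eq.trans)

definition lam_commute :: "nat \<Rightarrow> nat \<Rightarrow> nat \<Rightarrow> nat \<Rightarrow> nat \<Rightarrow> bool" where
  "lam_commute n i j k l \<longleftrightarrow> tvb_eq n (lam_word i j @ lam_word k l) (lam_word k l @ lam_word i j)"

definition lam_triangle :: "nat \<Rightarrow> nat \<Rightarrow> nat \<Rightarrow> nat \<Rightarrow> bool" where
  "lam_triangle n k i j \<longleftrightarrow>
     tvb_eq n (lam_word k i @ lam_word k j @ lam_word i j) (lam_word i j @ lam_word k j @ lam_word k i)"

lemma lam_commute_adj_swap:
  assumes "a \<in> {1..n}" "b \<in> {1..n}" "c \<in> {1..n}" "d \<in> {1..n}" "distinct [a, b, c, d]"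
    and m: "m \<in> {1..<n}" and "lam_commute n a b c d"
  shows "lam_commute n (adj_swap m a) (adj_swap m b) (adj_swap m c) (adj_swap m d)"
proof -
  have ab: "tvb_eq n ([rho m] @ lam_word a b @ [rho m]) (lam_word (adj_swap m a) (adj_swap m b))"
    and cd: "tvb_eq n ([rho m] @ lam_word c d @ [rho m]) (lam_word (adj_swap m c) (adj_swap m d))"
    using assms by - (rule rho_conj_lam_word; auto)+
  show ?thesis
    using assms(7) rho_conj_word_eq rho_conj_append[OF m ab cd] rho_conj_append[OF m cd ab]
    unfolding lam_commute_def by blast
qed

lemma lam_triangle_adj_swap:
  assumes "k \<in> {1..n}" "i \<in> {1..n}" "j \<in> {1..n}" "distinct [k, i, j]"
    and m: "m \<in> {1..<n}" and "lam_triangle n k i j"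
  shows "lam_triangle n (adj_swap m k) (adj_swap m i) (adj_swap m j)"
proof -
  have ki: "tvb_eq n ([rho m] @ lam_word k i @ [rho m]) (lam_word (adj_swap m k) (adj_swap m i))"
    and kj: "tvb_eq n ([rho m] @ lam_word k j @ [rho m]) (lam_word (adj_swap m k) (adj_swap m j))"
    and ij: "tvb_eq n ([rho m] @ lam_word i j @ [rho m]) (lam_word (adj_swap m i) (adj_swap m j))"
    using assms by - (rule rho_conj_lam_word; auto)+
  show ?thesis
    using assms(6) rho_conj_word_eq rho_conj_append[OF m ki rho_conj_append[OF m kj ij]]
      rho_conj_append[OF m ij rho_conj_append[OF m kj ki]]
    unfolding lam_triangle_def by blast
qed

lemma adj_swap_strand: "m \<in> {1..<n} \<Longrightarrow> a \<in> {1..n} \<Longrightarrow> adj_swap m a \<in> {1..n}"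
  by (auto simp: transpose_def)

lemma adj_swap_eq_iff [simp]: "adj_swap m a = adj_swap m b \<longleftrightarrow> a = b"
  by (auto simp: transpose_eq_iff)

text \<open>Adjacent transpositions sort any tuple of distinct strands to (1, 2, 3, 4): swapping
  the first entry x that is out of place with x - 1 decreases the weighted sum of the entries.\<close>
lemma distinct4_adj_swap_induct:
  assumes base: "4 \<le> n \<Longrightarrow> Q 1 2 3 4"
    and step: "\<And>a b c d m. a \<in> {1..n} \<Longrightarrow> b \<in> {1..n} \<Longrightarrow> c \<in> {1..n} \<Longrightarrow> d \<in> {1..n}
      \<Longrightarrow> distinct [a, b, c, d] \<Longrightarrow> m \<in> {1..<n} \<Longrightarrow> Q a b c d
      \<Longrightarrow> Q (adj_swap m a) (adj_swap m b) (adj_swap m c) (adj_swap m d)"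
  shows "a \<in> {1..n} \<Longrightarrow> b \<in> {1..n} \<Longrightarrow> c \<in> {1..n} \<Longrightarrow> d \<in> {1..n} \<Longrightarrow> distinct [a, b, c, d]
    \<Longrightarrow> Q a b c d"
proof (induction "4 * a + 3 * b + 2 * c + d" arbitrary: a b c d rule: less_induct)
  case less
  have swap: "Q a b c d" if m: "m \<in> {1..<n}"
    and lt: "4 * adj_swap m a + 3 * adj_swap m b + 2 * adj_swap m c + adj_swap m d < 4 * a + 3 * b + 2 * c + d"
  for m
  proof -
    have "adj_swap m a \<in> {1..n}" "adj_swap m b \<in> {1..n}" "adj_swap m c \<in> {1..n}" "adj_swap m d \<in> {1..n}"
      "distinct [adj_swap m a, adj_swap m b, adj_swap m c, adj_swap m d]"
      using less.prems adj_swap_strand[OF m] by simp_all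
    from step[OF this m less.hyps[OF lt this]] show ?thesis
      by simp
  qed
  consider "a \<noteq> 1" | "a = 1" "b \<noteq> 2" | "a = 1" "b = 2" "c \<noteq> 3" | "a = 1" "b = 2" "c = 3" "d \<noteq> 4"
    | "a = 1" "b = 2" "c = 3" "d = 4"
    by blast
  then show ?case
  proof cases
    case 1
    then obtain m where "a = Suc m" "m \<in> {1..<n}"
      using less.prems by (cases a) auto
    then show ?thesis
      using less.prems(5) by (intro swap[of m]) (simp_all add: transpose_def)
  next
    case 2
    then obtain m where "b = Suc m" "m \<in> {1..<n}" "a \<noteq> m"
      using less.prems by (cases b) auto
    then show ?thesis
      using less.prems(5) by (intro swap[of m]) (simp_all add: transpose_def)
  next
    case 3
    then obtain m where "c = Suc m" "m \<in> {1..<n}" "a \<noteq> m" "b \<noteq> m"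
      using less.prems by (cases c) auto
    then show ?thesis
      using less.prems(5) by (intro swap[of m]) (simp_all add: transpose_def)
  next
    case 4
    then obtain m where "d = Suc m" "m \<in> {1..<n}" "a \<noteq> m" "b \<noteq> m" "c \<noteq> m"
      using less.prems by (cases d) auto
    then show ?thesis
      using less.prems(5) by (intro swap[of m]) (simp_all add: transpose_def)
  next
    case 5
    then show ?thesis
      using less.prems base by auto
  qed
qed

lemma distinct3_adj_swap_induct:
  assumes base: "3 \<le> n \<Longrightarrow> Q 1 2 3"
    and step: "\<And>a b c m. a \<in> {1..n} \<Longrightarrow> b \<in> {1..n} \<Longrightarrow> c \<in> {1..n} \<Longrightarrow> distinct [a, b, c]
      \<Longrightarrow> m \<in> {1..<n} \<Longrightarrow> Q a b c \<Longrightarrow> Q (adj_swap m a) (adj_swap m b) (adj_swap m c)"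
  shows "a \<in> {1..n} \<Longrightarrow> b \<in> {1..n} \<Longrightarrow> c \<in> {1..n} \<Longrightarrow> distinct [a, b, c] \<Longrightarrow> Q a b c"
proof (induction "3 * a + 2 * b + c" arbitrary: a b c rule: less_induct)
  case less
  have swap: "Q a b c" if m: "m \<in> {1..<n}"
    and lt: "3 * adj_swap m a + 2 * adj_swap m b + adj_swap m c < 3 * a + 2 * b + c"
  for m
  proof -
    have "adj_swap m a \<in> {1..n}" "adj_swap m b \<in> {1..n}" "adj_swap m c \<in> {1..n}"
      "distinct [adj_swap m a, adj_swap m b, adj_swap m c]"
      using less.prems adj_swap_strand[OF m] by simp_all
    from step[OF this m less.hyps[OF lt this]] show ?thesis
      by simp
  qed
  consider "a \<noteq> 1" | "a = 1" "b \<noteq> 2" | "a = 1" "b = 2" "c \<noteq> 3" | "a = 1" "b = 2" "c = 3"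
    by blast
  then show ?case
  proof cases
    case 1
    then obtain m where "a = Suc m" "m \<in> {1..<n}"
      using less.prems by (cases a) auto
    then show ?thesis
      using less.prems(4) by (intro swap[of m]) (simp_all add: transpose_def)
  next
    case 2
    then obtain m where "b = Suc m" "m \<in> {1..<n}" "a \<noteq> m"
      using less.prems by (cases b) auto
    then show ?thesis
      using less.prems(4) by (intro swap[of m]) (simp_all add: transpose_def)
  next
    case 3
    then obtain m where "c = Suc m" "m \<in> {1..<n}" "a \<noteq> m" "b \<noteq> m"
      using less.prems by (cases c) auto
    then show ?thesis
      using less.prems(4) by (intro swap[of m]) (simp_all add: transpose_def)
  next
    case 4
    then show ?thesis
      using less.prems base by auto
  qed
qed

lemma lam_commute_1234: "4 \<le> n \<Longrightarrow> lam_commute n 1 2 3 4"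
proof -
  assume n: "4 \<le> n"
  have "tvb_eq n [rho 1, sigma_inv 1, rho 3, sigma_inv 3] [rho 1, rho 3, sigma_inv 1, sigma_inv 3]"
    using word_eq_context[OF sigma_inv_rho_commute[of 1 n 3], of "[rho 1]" "[sigma_inv 3]"] n by simp
  also have "tvb_eq n \<dots> [rho 3, rho 1, sigma_inv 1, sigma_inv 3]"
    using word_eq_context[OF rho_commute[of 1 n 3], of "[]" "[sigma_inv 1, sigma_inv 3]"] n by simp
  also have "tvb_eq n \<dots> [rho 3, rho 1, sigma_inv 3, sigma_inv 1]"
    using word_eq_context[OF sigma_inv_commute[of 1 n 3], of "[rho 3, rho 1]" "[]"] n by simp
  also have "tvb_eq n \<dots> [rho 3, sigma_inv 3, rho 1, sigma_inv 1]"
    using word_eq.sym[OF word_eq_context[OF sigma_inv_rho_commute[of 3 n 1], of "[rho 3]" "[sigma_inv 1]"]] n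
    by simp
  finally show ?thesis
    by (simp add: lam_commute_def lam_word_def lam_up_def rhos_def)
qed

lemma lam_triangle_123: "3 \<le> n \<Longrightarrow> lam_triangle n 1 2 3"
proof -
  assume n: "3 \<le> n"
  have "tvb_eq n [rho 1, sigma_inv 1, rho 2, rho 1, sigma_inv 1, rho 2, rho 2, sigma_inv 2]
      [rho 1, sigma_inv 1, rho 2, rho 1, sigma_inv 1, sigma_inv 2]"
    using word_eq_context[OF rho_rho[of 2 n], of "[rho 1, sigma_inv 1, rho 2, rho 1, sigma_inv 1]" "[sigma_inv 2]"] n
    by simp
  also have "tvb_eq n \<dots> [rho 1, rho 2, rho 1, sigma_inv 2, sigma_inv 1, sigma_inv 2]"
    using word_eq_context[OF sigma_inv_shift_up[of 1 n], of "[rho 1]" "[sigma_inv 1, sigma_inv 2]"] n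
    by (simp add: eval_nat_numeral)
  also have "tvb_eq n \<dots> [rho 1, rho 2, rho 1, sigma_inv 1, sigma_inv 2, sigma_inv 1]"
    using word_eq.sym[OF word_eq_context[OF sigma_inv_braid[of 1 n], of "[rho 1, rho 2, rho 1]" "[]"]] n
    by (simp add: eval_nat_numeral)
  also have "tvb_eq n \<dots> [rho 2, rho 1, rho 2, sigma_inv 1, sigma_inv 2, sigma_inv 1]"
    using word_eq_context[OF rho_braid[of 1 n], of "[]" "[sigma_inv 1, sigma_inv 2, sigma_inv 1]"] n
    by (simp add: eval_nat_numeral)
  also have "tvb_eq n \<dots> [rho 2, sigma_inv 2, rho 1, rho 2, sigma_inv 2, sigma_inv 1]"
    using word_eq.sym[OF word_eq_context[OF sigma_inv_shift_down[of 1 n], of "[rho 2]" "[sigma_inv 2, sigma_inv 1]"]] n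
    by (simp add: eval_nat_numeral)
  also have "tvb_eq n \<dots> [rho 2, sigma_inv 2, rho 1, rho 2, rho 1, rho 1, sigma_inv 2, sigma_inv 1]"
    using word_eq.sym[OF word_eq_context[OF rho_rho[of 1 n], of "[rho 2, sigma_inv 2, rho 1, rho 2]" "[sigma_inv 2, sigma_inv 1]"]] n
    by simp
  also have "tvb_eq n \<dots> [rho 2, sigma_inv 2, rho 2, rho 1, rho 2, rho 1, sigma_inv 2, sigma_inv 1]"
    using word_eq_context[OF rho_braid[of 1 n], of "[rho 2, sigma_inv 2]" "[rho 1, sigma_inv 2, sigma_inv 1]"] n
    by (simp add: eval_nat_numeral)
  also have "tvb_eq n \<dots> [rho 2, sigma_inv 2, rho 2, rho 1, sigma_inv 1, rho 2, rho 1, sigma_inv 1]"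
    using word_eq.sym[OF word_eq_context[OF sigma_inv_shift_up[of 1 n], of "[rho 2, sigma_inv 2, rho 2, rho 1]" "[sigma_inv 1]"]] n
    by (simp add: eval_nat_numeral)
  finally show ?thesis
    by (simp add: lam_triangle_def lam_word_def lam_up_def rhos_def eval_nat_numeral upt_rec)
qed

lemma lam_commute_all:
  "i \<in> {1..n} \<Longrightarrow> j \<in> {1..n} \<Longrightarrow> k \<in> {1..n} \<Longrightarrow> l \<in> {1..n} \<Longrightarrow> distinct [i, j, k, l]
    \<Longrightarrow> lam_commute n i j k l"
  by (rule distinct4_adj_swap_induct[where Q = "lam_commute n", OF lam_commute_1234 lam_commute_adj_swap])

lemma lam_triangle_all:
  "k \<in> {1..n} \<Longrightarrow> i \<in> {1..n} \<Longrightarrow> j \<in> {1..n} \<Longrightarrow> distinct [k, i, j] \<Longrightarrow> lam_triangle n k i j"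
  by (rule distinct3_adj_swap_induct[where Q = "lam_triangle n", OF lam_triangle_123 lam_triangle_adj_swap])

lemma lam_words_vp_rels:
  assumes "(l, r) \<in> vp_rels n"
  shows "tvb_eq n (wsubst (case_prod lam_word) l) (wsubst (case_prod lam_word) r)"
proof -
  from assms consider
    (commute) i j k m where "l = gw (i, j) @ gw (k, m)" "r = gw (k, m) @ gw (i, j)"
      "i \<in> {1..n}" "j \<in> {1..n}" "k \<in> {1..n}" "m \<in> {1..n}" "distinct [i, j, k, m]"
  | (triangle) i j k where "l = gw (k, i) @ gw (k, j) @ gw (i, j)" "r = gw (i, j) @ gw (k, j) @ gw (k, i)"
      "i \<in> {1..n}" "j \<in> {1..n}" "k \<in> {1..n}" "distinct [i, j, k]"
    unfolding vp_rels_def by blast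
  then show ?thesis
  proof cases
    case commute
    then show ?thesis
      using lam_commute_all[of i n j k m] by (simp add: lam_commute_def gw_def)
  next
    case triangle
    then show ?thesis
      using lam_triangle_all[of k n i j] by (auto simp: lam_triangle_def gw_def)
  qed
qed

section \<open>A retraction of TVB_n onto VP_n\<close>

type_synonym state = "nat set \<times> (nat \<Rightarrow> nat) \<times> (nat \<times> nat) word"

definition toggle :: "nat \<Rightarrow> nat set \<Rightarrow> nat set" where
  "toggle x E = (if x \<in> E then E - {x} else insert x E)"

definition crossing_word :: "nat set \<Rightarrow> nat \<Rightarrow> nat \<Rightarrow> (nat \<times> nat) word" where
  "crossing_word E a b =
     (if a \<in> E \<and> b \<in> E then [((b, a), True)] else if a \<notin> E \<and> b \<notin> E then [((a, b), True)] else [])"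

text \<open>A state (E, p, w) records the strands E carrying an odd
  number of twists, the strand p i at each position i, and a word w in the generators of VP_n.
  A crossing sigma_i^{-1} of strands a and b contributes lambda_ab, or lambda_ba when both
  strands are twisted, or nothing when exactly one is. The guards make the action trivial on
  states that are not meaningful, so that every relation holds there for free.\<close>
fun act_letter :: "nat \<Rightarrow> tvb_gen \<times> bool \<Rightarrow> state \<Rightarrow> state" where
  "act_letter n (S i, b) (E, p, w) =
     (if p permutes {1..n} \<and> i \<in> {1..<n} then
        (E, p \<circ> adj_swap i,
         w @ (if b then winv (crossing_word E (p i) (p (Suc i))) else crossing_word E (p (Suc i)) (p i)))
      else (E, p, w))"
| "act_letter n (Rh i, b) (E, p, w) =
     (if p permutes {1..n} \<and> i \<in> {1..<n} then (E, p \<circ> adj_swap i, w) else (E, p, w))"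
| "act_letter n (G j, b) (E, p, w) =
     (if p permutes {1..n} \<and> j \<in> {1..n} then (toggle (p j) E, p, w) else (E, p, w))"

definition act :: "nat \<Rightarrow> tvb_gen word \<Rightarrow> state \<Rightarrow> state" where
  "act n u s = fold (act_letter n) u s"

fun state_class :: "nat \<Rightarrow> state \<Rightarrow> nat set \<times> (nat \<Rightarrow> nat) \<times> (nat \<times> nat) word set" where
  "state_class n (E, p, w) = (E, p, wclass (vp_rels n) w)"

lemma act_Nil [simp]: "act n [] s = s"
  by (simp add: act_def)

lemma act_Cons [simp]: "act n (x # u) s = act n u (act_letter n x s)"
  by (simp add: act_def)

lemma act_append: "act n (u @ v) s = act n v (act n u s)"
  by (simp add: act_def)

lemma act_not_permutes: "\<not> p permutes {1..n} \<Longrightarrow> act n u (E, p, w) = (E, p, w)"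
proof (induct u)
  case (Cons x u)
  then show ?case
    by (cases x; cases "fst x") auto
qed simp

lemma state_class_act_eqI:
  assumes "\<And>E p w. p permutes {1..n} \<Longrightarrow> state_class n (act n u (E, p, w)) = state_class n (act n v (E, p, w))"
  shows "state_class n (act n u s) = state_class n (act n v s)"
proof -
  obtain E p w where s: "s = (E, p, w)"
    by (cases s)
  show ?thesis
  proof (cases "p permutes {1..n}")
    case True
    then show ?thesis
      unfolding s by (rule assms)
  next
    case False
    then show ?thesis
      unfolding s by (simp add: act_not_permutes)
  qed
qed

lemma state_class_act_letter:
  assumes "state_class n s = state_class n t"
  shows "state_class n (act_letter n x s) = state_class n (act_letter n x t)"
proof -
  obtain E p w w' where st: "s = (E, p, w)" "t = (E, p, w')" and w: "wclass (vp_rels n) w = wclass (vp_rels n) w'"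
    using assms by (cases s; cases t) auto
  have w_append: "wclass (vp_rels n) (w @ c) = wclass (vp_rels n) (w' @ c)" for c
    using word_eq_append[OF w[unfolded wclass_eq_iff] word_eq.refl] by (simp add: wclass_eq_iff)
  obtain g b where x: "x = (g, b)"
    by fastforce
  show ?thesis
    unfolding st x by (cases g) (simp_all add: w w_append)
qed

lemma state_class_act:
  "state_class n s = state_class n t \<Longrightarrow> state_class n (act n u s) = state_class n (act n u t)"
proof (induct u arbitrary: s t)
  case (Cons x u)
  show ?case
    using Cons.hyps[OF state_class_act_letter[OF Cons.prems]] by simp
qed simp

lemma permutes_adj_swap [simp]: "p permutes A \<Longrightarrow> i \<in> A \<Longrightarrow> Suc i \<in> A \<Longrightarrow> p \<circ> adj_swap i permutes A"
  by (rule permutes_compose[OF permutes_swap_id])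

lemma permutes_adjacent_values:
  assumes "p permutes {1..n}" "i \<in> {1..<n}"
  shows "p i \<in> {1..n}" "p (Suc i) \<in> {1..n}" "p i \<noteq> p (Suc i)"
  using assms permutes_in_image[OF assms(1)] permutes_inj[OF assms(1)] by (auto dest: injD)

lemma adj_swap_braid: "p \<circ> adj_swap i \<circ> adj_swap (Suc i) \<circ> adj_swap i = p \<circ> adj_swap (Suc i) \<circ> adj_swap i \<circ> adj_swap (Suc i)"
  by (rule ext) (simp add: transpose_def)

lemma adj_swap_commute:
  "i + 2 \<le> j \<or> j + 2 \<le> i \<Longrightarrow> p \<circ> adj_swap i \<circ> adj_swap j = p \<circ> adj_swap j \<circ> adj_swap i"
  by (rule ext) (auto simp: transpose_def)

lemma adj_swap_involutive [simp]: "p \<circ> adj_swap i \<circ> adj_swap i = p"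
  by (rule ext) simp

lemma toggle_toggle [simp]: "toggle x (toggle x E) = E"
  by (auto simp: toggle_def)

lemma toggle_commute: "toggle x (toggle y E) = toggle y (toggle x E)"
  by (auto simp: toggle_def)

lemma crossing_word_toggle_other: "x \<noteq> a \<Longrightarrow> x \<noteq> b \<Longrightarrow> crossing_word (toggle x E) a b = crossing_word E a b"
  by (auto simp: crossing_word_def toggle_def)

lemma crossing_word_toggle_both: "a \<noteq> b \<Longrightarrow> crossing_word (toggle a (toggle b E)) a b = crossing_word E b a"
  by (auto simp: crossing_word_def toggle_def)

lemma vp_commute: "{i, j, k, l} \<subseteq> {1..n} \<Longrightarrow> distinct [i, j, k, l] \<Longrightarrow>
    word_eq (vp_rels n) [((i, j), True), ((k, l), True)] [((k, l), True), ((i, j), True)]"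
  by (rule word_eq_relI) (auto simp: vp_rels_def gw_def)

lemma vp_triangle: "{i, j, k} \<subseteq> {1..n} \<Longrightarrow> distinct [i, j, k] \<Longrightarrow>
    word_eq (vp_rels n) [((k, i), True), ((k, j), True), ((i, j), True)] [((i, j), True), ((k, j), True), ((k, i), True)]"
  by (rule word_eq_relI) (auto simp: vp_rels_def gw_def)

lemma crossing_words_commute:
  assumes "{a, b, c, d} \<subseteq> {1..n}" "distinct [a, b, c, d]"
  shows "word_eq (vp_rels n) (crossing_word E a b @ crossing_word E c d) (crossing_word E c d @ crossing_word E a b)"
proof -
  have "word_eq (vp_rels n) [((a, b), True), ((c, d), True)] [((c, d), True), ((a, b), True)]"
    "word_eq (vp_rels n) [((a, b), True), ((d, c), True)] [((d, c), True), ((a, b), True)]"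
    "word_eq (vp_rels n) [((b, a), True), ((c, d), True)] [((c, d), True), ((b, a), True)]"
    "word_eq (vp_rels n) [((b, a), True), ((d, c), True)] [((d, c), True), ((b, a), True)]"
    using assms by (simp_all add: vp_commute insert_commute)
  then show ?thesis
    by (cases "a \<in> E"; cases "b \<in> E"; cases "c \<in> E"; cases "d \<in> E") (simp_all add: crossing_word_def)
qed

lemma crossing_words_triangle:
  assumes "{a, b, c} \<subseteq> {1..n}" "distinct [a, b, c]"
  shows "word_eq (vp_rels n) (crossing_word E a b @ crossing_word E a c @ crossing_word E b c)
    (crossing_word E b c @ crossing_word E a c @ crossing_word E a b)"
proof (cases "a \<in> E \<and> b \<in> E \<and> c \<in> E \<or> a \<notin> E \<and> b \<notin> E \<and> c \<notin> E")
  case True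
  moreover have "word_eq (vp_rels n) [((b, a), True), ((c, a), True), ((c, b), True)]
      [((c, b), True), ((c, a), True), ((b, a), True)]"
    using word_eq.sym[OF vp_triangle[of b a c n]] assms by (simp add: insert_commute)
  moreover have "word_eq (vp_rels n) [((a, b), True), ((a, c), True), ((b, c), True)]
      [((b, c), True), ((a, c), True), ((a, b), True)]"
    using vp_triangle[of b c a n] assms by (simp add: insert_commute)
  ultimately show ?thesis
    by (auto simp: crossing_word_def)
next
  case False
  then have "crossing_word E a b @ crossing_word E a c @ crossing_word E b c
      = crossing_word E b c @ crossing_word E a c @ crossing_word E a b"
    by (auto simp: crossing_word_def)
  then show ?thesis
    by simp
qed

lemma state_class_eqI: "p = p' \<Longrightarrow> word_eq (vp_rels n) w w' \<Longrightarrow> state_class n (E, p, w) = state_class n (E, p', w')"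
  by (simp add: wclass_eq_iff)

lemma act_sigma_braid:
  assumes "1 \<le> i" "i + 2 \<le> n"
  shows "state_class n (act n [sigma i, sigma (Suc i), sigma i] s)
    = state_class n (act n [sigma (Suc i), sigma i, sigma (Suc i)] s)"
proof (rule state_class_act_eqI)
  fix E p w
  assume p: "p permutes {1..n}"
  let ?a = "p i" and ?b = "p (Suc i)" and ?c = "p (Suc (Suc i))"
  have abc: "{?a, ?b, ?c} \<subseteq> {1..n}" "distinct [?a, ?b, ?c]"
    using assms permutes_in_image[OF p] by (auto simp: inj_eq[OF permutes_inj[OF p]])
  have L: "act n [sigma i, sigma (Suc i), sigma i] (E, p, w) = (E, p \<circ> adj_swap i \<circ> adj_swap (Suc i) \<circ> adj_swap i,
      w @ winv (crossing_word E ?b ?c @ crossing_word E ?a ?c @ crossing_word E ?a ?b))"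
    using p assms by simp
  have R: "act n [sigma (Suc i), sigma i, sigma (Suc i)] (E, p, w) = (E, p \<circ> adj_swap (Suc i) \<circ> adj_swap i \<circ> adj_swap (Suc i),
      w @ winv (crossing_word E ?a ?b @ crossing_word E ?a ?c @ crossing_word E ?b ?c))"
    using p assms by simp
  show "state_class n (act n [sigma i, sigma (Suc i), sigma i] (E, p, w))
      = state_class n (act n [sigma (Suc i), sigma i, sigma (Suc i)] (E, p, w))"
    unfolding L R
    by (rule state_class_eqI[OF adj_swap_braid word_eq_append[OF word_eq.refl word_eq_winv]])
      (rule word_eq.sym[OF crossing_words_triangle[OF abc]])
qed

lemma act_sigma_commute:
  assumes "i \<in> {1..<n}" "j \<in> {1..<n}" "i + 2 \<le> j \<or> j + 2 \<le> i"
  shows "state_class n (act n [sigma i, sigma j] s) = state_class n (act n [sigma j, sigma i] s)"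
proof (rule state_class_act_eqI)
  fix E p w
  assume p: "p permutes {1..n}"
  have ne: "j \<noteq> i" "j \<noteq> Suc i" "Suc j \<noteq> i" "Suc j \<noteq> Suc i"
    using assms(3) by auto
  have abcd: "{p i, p (Suc i), p j, p (Suc j)} \<subseteq> {1..n}" "distinct [p i, p (Suc i), p j, p (Suc j)]"
    using assms ne permutes_in_image[OF p] by (auto simp: inj_eq[OF permutes_inj[OF p]])
  have L: "act n [sigma i, sigma j] (E, p, w) = (E, p \<circ> adj_swap i \<circ> adj_swap j,
      w @ winv (crossing_word E (p j) (p (Suc j)) @ crossing_word E (p i) (p (Suc i))))"
    using p assms ne by simp
  have R: "act n [sigma j, sigma i] (E, p, w) = (E, p \<circ> adj_swap j \<circ> adj_swap i,
      w @ winv (crossing_word E (p i) (p (Suc i)) @ crossing_word E (p j) (p (Suc j))))"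
    using p assms ne by simp
  show "state_class n (act n [sigma i, sigma j] (E, p, w)) = state_class n (act n [sigma j, sigma i] (E, p, w))"
    unfolding L R
    by (rule state_class_eqI[OF adj_swap_commute[OF assms(3)] word_eq_append[OF word_eq.refl word_eq_winv]])
      (rule word_eq.sym[OF crossing_words_commute[OF abcd]])
qed

lemma act_gamma_sigma_commute:
  assumes "i \<in> {1..<n}" "j \<in> {1..n}" "j \<noteq> i" "j \<noteq> Suc i"
  shows "state_class n (act n [(G j, True), sigma i] s) = state_class n (act n [sigma i, (G j, True)] s)"
proof (rule state_class_act_eqI)
  fix E p w
  assume p: "p permutes {1..n}"
  have "p j \<noteq> p i" "p j \<noteq> p (Suc i)"
    using assms by (simp_all add: inj_eq[OF permutes_inj[OF p]])
  then show "state_class n (act n [(G j, True), sigma i] (E, p, w)) = state_class n (act n [sigma i, (G j, True)] (E, p, w))"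
    using p assms by (simp add: crossing_word_toggle_other)
qed

lemma act_rho_sigma_rho:
  assumes "i \<in> {1..<n}"
  shows "state_class n (act n [rho i, sigma i, rho i] s)
    = state_class n (act n [(G (Suc i), True), (G i, True), sigma i, (G i, True), (G (Suc i), True)] s)"
proof (rule state_class_act_eqI)
  fix E p w
  assume p: "p permutes {1..n}"
  have ne: "p i \<noteq> p (Suc i)"
    using permutes_adjacent_values[OF p assms] by simp
  have "toggle (p i) (toggle (p (Suc i)) (toggle (p i) (toggle (p (Suc i)) E))) = E"
    by (metis toggle_commute toggle_toggle)
  then show "state_class n (act n [rho i, sigma i, rho i] (E, p, w))
    = state_class n (act n [(G (Suc i), True), (G i, True), sigma i, (G i, True), (G (Suc i), True)] (E, p, w))"
    using p assms by (simp add: crossing_word_toggle_both[OF ne])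
qed

lemma act_rho_rho:
  "i \<in> {1..<n} \<Longrightarrow> state_class n (act n [rho i, rho i] s) = state_class n (act n [] s)"
  by (rule state_class_act_eqI) simp

lemma act_rho_commute:
  assumes "i \<in> {1..<n}" "j \<in> {1..<n}" "i + 2 \<le> j \<or> j + 2 \<le> i"
  shows "state_class n (act n [rho i, rho j] s) = state_class n (act n [rho j, rho i] s)"
  by (rule state_class_act_eqI) (use assms in \<open>simp add: adj_swap_commute[OF assms(3)]\<close>)

lemma act_rho_braid:
  "1 \<le> i \<Longrightarrow> i + 2 \<le> n
    \<Longrightarrow> state_class n (act n [rho i, rho (Suc i), rho i] s) = state_class n (act n [rho (Suc i), rho i, rho (Suc i)] s)"
  by (rule state_class_act_eqI) (simp add: adj_swap_braid)

lemma act_sigma_rho_commute: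
  assumes "i \<in> {1..<n}" "j \<in> {1..<n}" "i + 2 \<le> j \<or> j + 2 \<le> i"
  shows "state_class n (act n [sigma i, rho j] s) = state_class n (act n [rho j, sigma i] s)"
proof -
  have ne: "j \<noteq> i" "j \<noteq> Suc i" "Suc j \<noteq> i" "Suc j \<noteq> Suc i"
    using assms(3) by auto
  show ?thesis
    by (rule state_class_act_eqI) (use assms ne in \<open>simp add: adj_swap_commute[OF assms(3)]\<close>)
qed

lemma act_rho_rho_sigma:
  "1 \<le> i \<Longrightarrow> i + 2 \<le> n
    \<Longrightarrow> state_class n (act n [rho i, rho (Suc i), sigma i] s) = state_class n (act n [sigma (Suc i), rho i, rho (Suc i)] s)"
  by (rule state_class_act_eqI) (simp add: adj_swap_braid)

lemma act_gamma_gamma: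
  "i \<in> {1..n} \<Longrightarrow> state_class n (act n [(G i, True), (G i, True)] s) = state_class n (act n [] s)"
  by (rule state_class_act_eqI) simp

lemma act_gamma_commute:
  "i \<in> {1..n} \<Longrightarrow> j \<in> {1..n}
    \<Longrightarrow> state_class n (act n [(G i, True), (G j, True)] s) = state_class n (act n [(G j, True), (G i, True)] s)"
  by (rule state_class_act_eqI) (simp add: toggle_commute)

lemma act_gamma_rho_commute:
  "i \<in> {1..<n} \<Longrightarrow> j \<in> {1..n} \<Longrightarrow> j \<noteq> i \<Longrightarrow> j \<noteq> Suc i
    \<Longrightarrow> state_class n (act n [(G j, True), rho i] s) = state_class n (act n [rho i, (G j, True)] s)"
  by (rule state_class_act_eqI) simp

lemma act_rho_gamma:
  "i \<in> {1..<n} \<Longrightarrow> state_class n (act n [rho i, (G i, True)] s) = state_class n (act n [(G (Suc i), True), rho i] s)"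
  by (rule state_class_act_eqI) simp

lemma act_tvb_rel:
  assumes "(l, r) \<in> tvb_rels n"
  shows "state_class n (act n l s) = state_class n (act n r s)"
  using assms unfolding tvb_rels_def gw_def
  by (elim UnE)
    (auto simp del: act_Cons intro: act_sigma_braid act_sigma_commute act_rho_rho act_rho_commute act_rho_braid act_sigma_rho_commute
      act_rho_rho_sigma act_gamma_gamma act_gamma_commute act_gamma_rho_commute act_gamma_sigma_commute act_rho_gamma
      act_rho_sigma_rho)

lemma act_cancel_pair: "state_class n (act n [(g, b), (g, \<not> b)] s) = state_class n s"
proof -
  obtain E p w where s: "s = (E, p, w)"
    by (cases s)
  have "word_eq (vp_rels n) (w @ c @ winv c) w" "word_eq (vp_rels n) (w @ winv c @ c) w" for c
    using word_eq_append[OF word_eq.refl word_eq_append_winv, of _ w c]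
      word_eq_append[OF word_eq.refl word_eq_winv_append, of _ w c]
    by simp_all
  then show ?thesis
    unfolding s by (cases g) (auto simp: wclass_eq_iff)
qed

lemma state_class_act_word_eq:
  "tvb_eq n u v \<Longrightarrow> state_class n (act n u s) = state_class n (act n v s)"
proof (induction arbitrary: s rule: word_eq.induct)
  case (cancel u g b v)
  then show ?case
    using state_class_act[OF act_cancel_pair] by (simp add: act_append)
next
  case (rel l r u v)
  then show ?case
    using state_class_act[OF act_tvb_rel[OF rel]] by (simp add: act_append)
qed simp_all

lemma letter_perm_adj_swap [simp]: "letter_perm (Rh i) = adj_swap i" "letter_perm (S i) = adj_swap i"
  by (auto simp: fun_eq_iff transpose_def)

declare letter_perm.simps(1,2) [simp del]

lemma perm_word_Nil [simp]: "perm_word [] = id"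
  by (simp add: perm_word_def)

lemma perm_word_Cons [simp]: "perm_word ((g, b) # u) = letter_perm g \<circ> perm_word u"
  by (simp add: perm_word_def)

lemma perm_word_append: "perm_word (u @ v) = perm_word u \<circ> perm_word v"
  by (induct u) (auto simp: comp_assoc)

lemma letter_perm_involutive [simp]: "letter_perm g \<circ> letter_perm g = id"
  by (cases g) simp_all

lemma perm_word_append_rev: "perm_word (u @ rev u) = id"
proof (induct u)
  case (Cons x u)
  obtain g b where "x = (g, b)"
    by fastforce
  then have "perm_word ((x # u) @ rev (x # u)) = letter_perm g \<circ> perm_word (u @ rev u) \<circ> letter_perm g"
    by (simp add: perm_word_append comp_assoc)
  also have "\<dots> = id"
    by (simp only: Cons comp_id letter_perm_involutive)
  finally show ?case .
qed simp

lemma perm_word_winv: "perm_word (winv u) = perm_word (rev u)"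
  by (induct u) (auto simp: perm_word_append)

lemma perm_word_winv_eq_id: "perm_word u = id \<Longrightarrow> perm_word (winv u) = id"
  using perm_word_append_rev[of "rev u"] by (simp add: perm_word_winv perm_word_append)

lemma perm_word_lam_word: "perm_word (lam_word k l) = id"
proof -
  have "perm_word (lam_up a) = id" "perm_word (lam_down a) = id" for a
    by (simp_all add: lam_up_def lam_down_def comp_assoc)
  then show ?thesis
    using perm_word_append_rev by (simp add: lam_word_def perm_word_append comp_assoc)
qed

definition rho_word :: "nat \<Rightarrow> tvb_gen word \<Rightarrow> bool" where
  "rho_word n u \<longleftrightarrow> (\<forall>x\<in>set u. \<exists>i b. x = (Rh i, b) \<and> i \<in> {1..<n})"

lemma act_rho_word:
  "rho_word n u \<Longrightarrow> p permutes {1..n} \<Longrightarrow> act n u (E, p, w) = (E, p \<circ> perm_word u, w)"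
proof (induct u arbitrary: p)
  case (Cons x u)
  then obtain i b where "x = (Rh i, b)" "i \<in> {1..<n}" "rho_word n u"
    by (auto simp: rho_word_def)
  with Cons show ?case
    by (simp add: comp_assoc)
qed simp

lemma rho_word_rhos: "b \<le> n \<Longrightarrow> rho_word n (rhos a b)" "b \<le> n \<Longrightarrow> rho_word n (rev (rhos a b))"
    "b \<le> n \<Longrightarrow> rho_word n (winv (rhos a b))" "b \<le> n \<Longrightarrow> rho_word n (winv (rev (rhos a b)))"
  by (auto simp: rho_word_def rhos_def)

lemma perm_word_rhos: "a < b \<Longrightarrow> perm_word (rhos a b) a = a \<and> perm_word (rhos a b) (Suc a) = b"
proof (induct b)
  case (Suc b)
  show ?case
  proof (cases "a < b")
    case True
    then show ?thesis
      using Suc.hyps[OF True] by (simp add: rhos_Suc)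
  next
    case False
    then show ?thesis
      using Suc.prems by (simp add: rhos_def)
  qed
qed simp

lemma permutes_perm_word: "rho_word n u \<Longrightarrow> perm_word u permutes {1..n}"
proof (induct u)
  case (Cons x u)
  then obtain i b where "x = (Rh i, b)" "i \<in> {1..<n}" "rho_word n u"
    by (auto simp: rho_word_def)
  then have "adj_swap i permutes {1..n}"
    by (intro permutes_swap_id) auto
  from permutes_compose[OF Cons.hyps[OF \<open>rho_word n u\<close>] this] show ?case
    by (simp only: \<open>x = (Rh i, b)\<close> perm_word_Cons letter_perm_adj_swap)
qed (simp add: permutes_id)

lemma act_rho_conj:
  assumes "rho_word n u" "rho_word n u'" "perm_word u \<circ> perm_word u' = id"
    and "act n m ({}, perm_word u, w) = ({}, perm_word u, w @ c)"
  shows "act n (u @ m @ u') ({}, id, w) = ({}, id, w @ c)"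
  using assms act_rho_word[OF assms(1) permutes_id] act_rho_word[OF assms(2) permutes_perm_word[OF assms(1)]]
  by (simp add: act_append)

text \<open>The ladder of rhos brings the strands k and l to the positions of the single crossing
  sigma^{-1} in lambda_{a,a+1} (or lambda_{a+1,a}).\<close>
lemma act_lam_word:
  assumes "k \<in> {1..n}" "l \<in> {1..n}" "k \<noteq> l"
  shows "act n (lam_word k l) ({}, id, w) = ({}, id, w @ [((k, l), True)])"
    and "act n (winv (lam_word k l)) ({}, id, w) = ({}, id, w @ [((k, l), False)])"
proof -
  define a b where "a = min k l" and "b = max k l"
  define m where "m = (if k < l then lam_up a else lam_down a)"
  let ?P = "perm_word (rhos a b)"
  have ab: "a < b" "b \<le> n" "a \<in> {1..<n}"
    using assms by (auto simp: a_def b_def)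
  have P: "?P permutes {1..n}" "?P a = a" "?P (Suc a) = b"
    using permutes_perm_word[OF rho_word_rhos(1)] perm_word_rhos[OF ab(1)] ab by auto
  have lam: "lam_word k l = rhos a b @ m @ rev (rhos a b)"
    using assms by (auto simp: lam_word_def m_def a_def b_def)
  have inv: "perm_word (rhos a b) \<circ> perm_word (rev (rhos a b)) = id"
    "perm_word (winv (rev (rhos a b))) \<circ> perm_word (winv (rhos a b)) = id"
    using perm_word_append_rev[of "rhos a b"] by (simp_all add: perm_word_winv perm_word_append)
  have "?P (adj_swap a a) = b" "?P (adj_swap a (Suc a)) = a"
    using P by simp_all
  moreover have "(k, l) = (if k < l then (a, b) else (b, a))"
    using assms by (auto simp: a_def b_def)
  ultimately have mid: "act n m ({}, ?P, w) = ({}, ?P, w @ [((k, l), True)])"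
    "act n (winv m) ({}, ?P, w) = ({}, ?P, w @ [((k, l), False)])"
    using P(1) ab by (simp_all add: m_def lam_up_def lam_down_def crossing_word_def)
  show "act n (lam_word k l) ({}, id, w) = ({}, id, w @ [((k, l), True)])"
    unfolding lam by (rule act_rho_conj[OF rho_word_rhos(1,2)[OF ab(2)] inv(1) mid(1)])
  have "perm_word (winv (rev (rhos a b))) = ?P"
    by (simp add: perm_word_winv)
  then show "act n (winv (lam_word k l)) ({}, id, w) = ({}, id, w @ [((k, l), False)])"
    unfolding lam using act_rho_conj[OF rho_word_rhos(4,3)[OF ab(2)] inv(2)] mid(2) by simp
qed

lemma hom_kills_generate:
  assumes "group A" "group K" "\<psi> \<in> hom (A\<lparr>carrier := H\<rparr>) K" "gens \<subseteq> carrier A"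
    and "generate A gens \<subseteq> H" "\<And>x. x \<in> gens \<Longrightarrow> \<psi> x = \<one>\<^bsub>K\<^esub>"
  shows "x \<in> generate A gens \<Longrightarrow> \<psi> x = \<one>\<^bsub>K\<^esub>"
proof -
  interpret A: group A by fact
  interpret K: group K by fact
  have mult: "\<psi> (x \<otimes>\<^bsub>A\<^esub> y) = \<psi> x \<otimes>\<^bsub>K\<^esub> \<psi> y" "\<psi> x \<in> carrier K" if "x \<in> H" "y \<in> H" for x y
    using assms(3) that by (auto simp: hom_def)
  have one_H: "\<one>\<^bsub>A\<^esub> \<in> H"
    using assms(5) generate.one by blast
  have "\<psi> \<one>\<^bsub>A\<^esub> \<otimes>\<^bsub>K\<^esub> \<psi> \<one>\<^bsub>A\<^esub> = \<psi> \<one>\<^bsub>A\<^esub>"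
    using mult(1)[OF one_H one_H] by simp
  then have psi_one: "\<psi> \<one>\<^bsub>A\<^esub> = \<one>\<^bsub>K\<^esub>"
    using K.l_cancel_one[OF mult(2)[OF one_H one_H] mult(2)[OF one_H one_H]] by blast
  show "x \<in> generate A gens \<Longrightarrow> \<psi> x = \<one>\<^bsub>K\<^esub>"
  proof (induction rule: generate.induct)
    case one
    show ?case by (rule psi_one)
  next
    case (incl h)
    then show ?case by (rule assms(6))
  next
    case (inv h)
    then have h: "h \<in> H" "inv\<^bsub>A\<^esub> h \<in> H" "h \<in> carrier A"
      using assms(4,5) generate.incl[OF inv] generate.inv[OF inv] by auto
    have "\<psi> h \<otimes>\<^bsub>K\<^esub> \<psi> (inv\<^bsub>A\<^esub> h) = \<one>\<^bsub>K\<^esub>"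
      using mult(1)[OF h(1,2)] psi_one h(3) by simp
    then show ?case
      using assms(6)[OF inv] mult(2)[OF h(2) h(2)] by simp
  next
    case (eng h1 h2)
    then show ?case
      using assms(5) mult[of h1 h2] by auto
  qed
qed

definition lam_hom :: "nat \<Rightarrow> (nat \<times> nat) word set \<Rightarrow> tvb_gen word set" where
  "lam_hom n = subst_hom (vp_rels n) (tvb_rels n) (case_prod lam_word)"

lemma word_substitution_lam_word:
  "word_substitution (vp_gens n) (vp_rels n) (tvb_gens n) (tvb_rels n) (case_prod lam_word)"
proof
  fix g
  assume "g \<in> vp_gens n"
  then show "set (case_prod lam_word g) \<subseteq> tvb_gens n \<times> UNIV"
    by (auto simp: vp_gens_def lam_word_def rhos_def lam_up_def lam_down_def tvb_gens_def)
qed (rule lam_words_vp_rels)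

interpretation lam: word_substitution "vp_gens n" "vp_rels n" "tvb_gens n" "tvb_rels n" "case_prod lam_word"
  by (rule word_substitution_lam_word)

lemma lam_hom_wclass: "lam_hom n (wclass (vp_rels n) u) = tvb_el n (wsubst (case_prod lam_word) u)"
  by (simp add: lam_hom_def lam.subst_hom_wclass tvb_el_def)

lemma lam_hom_hom: "lam_hom n \<in> hom (VP n) (TVB n)"
  unfolding lam_hom_def VP_def TVB_def by (rule lam.subst_hom_hom)

lemma lam_hom_vp_gen: "lam_hom n (vp_gen n k l) = lam_el n k l"
  by (simp add: vp_gen_def gw_def lam_hom_wclass lam_el_def)

lemma act_wsubst_lam_word:
  "set u \<subseteq> vp_gens n \<times> UNIV \<Longrightarrow> act n (wsubst (case_prod lam_word) u) ({}, id, w) = ({}, id, w @ u)"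
proof (induct u arbitrary: w)
  case (Cons x u)
  then obtain k l b where x: "x = ((k, l), b)" "k \<in> {1..n}" "l \<in> {1..n}" "k \<noteq> l"
    by (cases x) (auto simp: vp_gens_def)
  then have step: "act n (if b then lam_word k l else winv (lam_word k l)) ({}, id, w) = ({}, id, w @ [x])"
    by (simp add: act_lam_word)
  have "act n (wsubst (case_prod lam_word) (x # u)) ({}, id, w)
      = act n (wsubst (case_prod lam_word) u) (act n (if b then lam_word k l else winv (lam_word k l)) ({}, id, w))"
    by (simp only: x(1) wsubst_simps(2) act_append case_prod_conv)
  also have "\<dots> = ({}, id, (w @ [x]) @ u)"
    unfolding step using Cons by (simp add: id_def)
  finally show ?case
    by (simp add: id_def)
qed simp

lemma lam_hom_inj: "inj_on (lam_hom n) (carrier (VP n))"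
proof (rule inj_onI)
  fix A B
  assume "A \<in> carrier (VP n)" "B \<in> carrier (VP n)" and eq: "lam_hom n A = lam_hom n B"
  then obtain u v where A: "A = wclass (vp_rels n) u" "set u \<subseteq> vp_gens n \<times> UNIV"
    and B: "B = wclass (vp_rels n) v" "set v \<subseteq> vp_gens n \<times> UNIV"
    unfolding VP_def by (auto elim!: pres_group_elim)
  have "tvb_eq n (wsubst (case_prod lam_word) u) (wsubst (case_prod lam_word) v)"
    using eq by (simp add: A B lam_hom_wclass tvb_el_def wclass_eq_iff)
  from state_class_act_word_eq[OF this, of "({}, id, [])"] show "A = B"
    by (simp add: A B act_wsubst_lam_word)
qed

lemma lam_hom_TVP: "lam_hom n ` carrier (VP n) \<subseteq> TVP n"
proof
  fix y
  assume "y \<in> lam_hom n ` carrier (VP n)"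
  then obtain u where y: "y = lam_hom n (wclass (vp_rels n) u)" and u: "set u \<subseteq> vp_gens n \<times> UNIV"
    unfolding VP_def by (auto elim!: pres_group_elim)
  have "perm_word (wsubst (case_prod lam_word) u) = id"
    by (induct u) (auto simp: perm_word_append perm_word_lam_word perm_word_winv_eq_id)
  moreover have "y \<in> carrier (TVB n)"
    using y u hom_carrier[OF lam_hom_hom] unfolding VP_def by (fastforce simp: carrier_pres_group)
  ultimately show "y \<in> TVP n"
    using lam.set_wsubst[OF u] by (auto simp: TVP_def y lam_hom_wclass)
qed

lemma lam_hom_image:
  "lam_hom n ` carrier (VP n) = generate (TVB n) {lam_el n k l | k l. (k, l) \<in> vp_gens n}"
proof -
  interpret group_hom "VP n" "TVB n" "lam_hom n"
    by (simp add: group_hom_def group_hom_axioms_def group_pres_group VP_def TVB_def lam_hom_hom[unfolded VP_def TVB_def])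
  have gens: "{wclass (vp_rels n) (gw g) | g. g \<in> vp_gens n} \<subseteq> carrier (VP n)"
    by (auto simp: VP_def carrier_pres_group gw_def)
  have "lam_hom n ` {wclass (vp_rels n) (gw g) | g. g \<in> vp_gens n} = {lam_el n k l | k l. (k, l) \<in> vp_gens n}"
    using lam_hom_vp_gen unfolding vp_gen_def by force
  then show ?thesis
    using generate_img[OF gens] carrier_pres_group_generate[of "vp_gens n" "vp_rels n"]
    by (simp add: VP_def)
qed

lemma lam_el_carrier: "(k, l) \<in> vp_gens n \<Longrightarrow> lam_el n k l \<in> carrier (TVB n)"
proof -
  assume "(k, l) \<in> vp_gens n"
  then have "vp_gen n k l \<in> carrier (VP n)"
    by (auto simp: VP_def vp_gen_def carrier_pres_group gw_def)
  with hom_carrier[OF lam_hom_hom] have "lam_hom n (vp_gen n k l) \<in> carrier (TVB n)"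
    by blast
  then show ?thesis
    by (simp add: lam_hom_vp_gen)
qed

lemma lam_hom_kernel:
  assumes "\<psi> \<in> hom ((TVB n)\<lparr>carrier := TVP n\<rparr>) (TVB n)"
    and "\<And>k l. (k, l) \<in> vp_gens n \<Longrightarrow> \<psi> (lam_el n k l) = \<one>\<^bsub>TVB n\<^esub>"
  shows "lam_hom n ` carrier (VP n) \<subseteq> kernel ((TVB n)\<lparr>carrier := TVP n\<rparr>) (TVB n) \<psi>"
proof
  fix y
  assume y: "y \<in> lam_hom n ` carrier (VP n)"
  have group_TVB: "group (TVB n)"
    by (simp add: TVB_def group_pres_group)
  have "{lam_el n k l | k l. (k, l) \<in> vp_gens n} \<subseteq> carrier (TVB n)"
    using lam_el_carrier by blast
  from hom_kills_generate[OF group_TVB group_TVB assms(1) this] have "\<psi> y = \<one>\<^bsub>TVB n\<^esub>"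
    using y lam_hom_TVP assms(2) unfolding lam_hom_image by blast
  then show "y \<in> kernel ((TVB n)\<lparr>carrier := TVP n\<rparr>) (TVB n) \<psi>"
    using y lam_hom_TVP by (auto simp: kernel_def)
qed

theorem mainTheorem8:
  fixes n :: nat
  assumes "n \<ge> 2"
  shows "\<exists>f. f \<in> hom (VP n) (TVB n)
          \<and> (\<forall>k l. (k, l) \<in> vp_gens n \<longrightarrow> f (vp_gen n k l) = lam_el n k l)
          \<and> inj_on f (carrier (VP n))
          \<and> f ` carrier (VP n) \<subseteq> TVP n
          \<and> (\<forall>\<psi>. \<psi> \<in> hom ((TVB n)\<lparr>carrier := TVP n\<rparr>) (TVB n)
                 \<and> (\<forall>k l. (k, l) \<in> vp_gens n \<longrightarrow> \<psi> (lam_el n k l) = \<one>\<^bsub>TVB n\<^esub>)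
                 \<and> (\<forall>j. 1 \<le> j \<and> j \<le> n \<longrightarrow> \<psi> (gamma_el n j) = gamma_el n j)
               \<longrightarrow> f ` carrier (VP n) \<subseteq> kernel ((TVB n)\<lparr>carrier := TVP n\<rparr>) (TVB n) \<psi>)
          \<and> VP n \<cong> (TVB n)\<lparr>carrier := generate (TVB n) {lam_el n k l | k l. (k, l) \<in> vp_gens n}\<rparr>"
proof (intro exI[of _ "lam_hom n"] conjI allI impI)
  show "lam_hom n \<in> hom (VP n) (TVB n)" "inj_on (lam_hom n) (carrier (VP n))"
    "lam_hom n ` carrier (VP n) \<subseteq> TVP n"
    by (fact lam_hom_hom lam_hom_inj lam_hom_TVP)+
  show "lam_hom n (vp_gen n k l) = lam_el n k l" for k l
    by (rule lam_hom_vp_gen)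
  show "lam_hom n ` carrier (VP n) \<subseteq> kernel ((TVB n)\<lparr>carrier := TVP n\<rparr>) (TVB n) \<psi>"
    if "\<psi> \<in> hom ((TVB n)\<lparr>carrier := TVP n\<rparr>) (TVB n)
      \<and> (\<forall>k l. (k, l) \<in> vp_gens n \<longrightarrow> \<psi> (lam_el n k l) = \<one>\<^bsub>TVB n\<^esub>)
      \<and> (\<forall>j. 1 \<le> j \<and> j \<le> n \<longrightarrow> \<psi> (gamma_el n j) = gamma_el n j)" for \<psi>
    using that by (intro lam_hom_kernel) auto
  have "lam_hom n \<in> iso (VP n) ((TVB n)\<lparr>carrier := lam_hom n ` carrier (VP n)\<rparr>)"
    using lam_hom_hom lam_hom_inj by (auto simp: iso_def hom_def bij_betw_def)
  then show "VP n \<cong> (TVB n)\<lparr>carrier := generate (TVB n) {lam_el n k l | k l. (k, l) \<in> vp_gens n}\<rparr>"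
    unfolding lam_hom_image by (rule is_isoI)
qed

end
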